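(* Let $(\theta_k,\lambda_k)_{k=0}^{K}$ be random sequences with $\theta_0\in\mathbb{R}^d$ deterministic, $\lambda_k\in[0,2/\delta]$ for all $k$, and $$\theta_{k+1}=\theta_k+\alpha\,\omega_k,\qquad k=0,\dots,K-1,$$ where $\alpha>0$ and $\omega_k\in\mathbb{R}^d$ are random vectors. Let $\mathcal{F}_k$ be a filtration such that $\theta_k,\lambda_k$ are $\mathcal{F}_k$-measurable, write $\mathbb{E}_k[\cdot]=\mathbb{E}[\cdot\mid\mathcal{F}_k]$, and let $\omega_k^*:=F(\theta_k)^{-1}\nabla_\theta\mathcal{L}(\theta_k,\lambda_k)$. Suppose the Score-function, Fisher non-degeneracy and Transferred compatible approximation assumptions below hold, and that $\mathbb{E}_{s\sim d^{\pi^*}}[\mathrm{KL}(\pi^*(\cdot|s)\,\|\,\pi_{\theta_0}(\cdot|s))]<\infty$. Then $$\frac{1}{K}\mathbb{E}\sum_{k=0}^{K-1}\big(\mathcal{L}(\pi^*,\lambda_k)-\mathcal{L}(\theta_k,\lambda_k)\big)\le \sqrt{\epsilon_{\mathrm{bias}}}+\frac{G_1}{K}\sum_{k=0}^{K-1}\mathbb{E}\big\|\mathbb{E}_k[\omega_k]-\omega_k^*\big\|+\frac{\alpha G_2}{2K}\sum_{k=0}^{K-1}\mathbb{E}\|\omega_k\|^2+\frac{1}{\alpha K}\mathbb{E}_{s\sim d^{\pi^*}}\big[\mathrm{KL}(\pi^*(\cdot|s)\,\|\,\pi_{\theta_0}(\cdot|s))\big].$$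
   Context: CMDP setting: finite state space $\mathcal{S}$, finite action space $\mathcal{A}$, reward $r:\mathcal{S}\times\mathcal{A}\to[0,1]$, cost $c:\mathcal{S}\times\mathcal{A}\to[-1,1]$, transition kernel $P(\cdot|s,a)$. A (stationary randomized) policy is $\pi:\mathcal{S}\to\Delta(\mathcal{A})$; $\Pi$ is the set of all policies. Ergodicity: for every policy $\pi$ the state chain with kernel $P^\pi(s,s')=\sum_a\pi(a|s)P(s'|s,a)$ is irreducible and aperiodic, with unique stationary distribution $d^\pi$; set $\nu^\pi(s,a)=d^\pi(s)\pi(a|s)$. For $g\in\{r,c\}$: $J_g^\pi=\sum_{s,a}\nu^\pi(s,a)g(s,a)$, $Q_g^\pi(s,a)=\mathbb{E}_\pi[\sum_{t\ge0}(g(s_t,a_t)-J_g^\pi)\mid s_0=s,a_0=a]$, $V_g^\pi(s)=\mathbb{E}_{a\sim\pi(s)}Q_g^\pi(s,a)$, $A_g^\pi=Q_g^\pi-V_g^\pi$. Parametrized policies $\pi_\theta$, $\theta\in\mathbb{R}^d$, differentiable in $\theta$; $J_g(\theta):=J_g^{\pi_\theta}$. Lagrangian $\mathcal{L}(\theta,\lambda)=J_r(\theta)+\lambda J_c(\theta)$ and, for a policy $\pi$, $\mathcal{L}(\pi,\lambda)=J_r^\pi+\lambda J_c^\pi$. Fisher matrix $F(\theta)=\mathbb{E}_{(s,a)\sim\nu^{\pi_\theta}}[\nabla_\theta\log\pi_\theta(a|s)\nabla_\theta\log\pi_\theta(a|s)^\top]$. Slater: there exist $\delta\in(0,1)$ and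 $\bar\theta$ with $J_c(\bar\theta)\ge\delta$. $\pi^*$ is an optimal solution of $\max_{\pi\in\Pi}J_r^\pi$ s.t. $J_c^\pi\ge0$. Score-function assumption: for all $\theta,\theta_1,\theta_2$ and $(s,a)$, $\|\nabla_\theta\log\pi_\theta(a|s)\|\le G_1$ and $\|\nabla_\theta\log\pi_{\theta_1}(a|s)-\nabla_\theta\log\pi_{\theta_2}(a|s)\|\le G_2\|\theta_1-\theta_2\|$. Fisher non-degeneracy: $F(\theta)-\mu I_d$ is positive semidefinite for all $\theta$, for some $\mu>0$. Transferred compatible approximation: for all $\theta$ and $\lambda\in[0,2/\delta]$, with $\omega^*_{\theta,\lambda}=F(\theta)^{-1}\nabla_\theta\mathcal{L}(\theta,\lambda)$, $\mathbb{E}_{(s,a)\sim\nu^{\pi^*}}\big[(\nabla_\theta\log\pi_\theta(a|s)^\top\omega^*_{\theta,\lambda}-A_r^{\pi_\theta}(s,a)-\lambda A_c^{\pi_\theta}(s,a))^2\big]\le\epsilon_{\mathrm{bias}}$. *)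

theory Defs
  imports "HOL-Analysis.Analysis" "HOL-Probability.Probability"
begin

text \<open>States 's and actions 'a are finite types. A transition kernel is
  P s a s' = P(s'|s,a); a policy is pol s a = pol(a|s).\<close>

definition is_dist :: "('b::finite \<Rightarrow> real) \<Rightarrow> bool" where
  "is_dist p \<longleftrightarrow> (\<forall>x. 0 \<le> p x) \<and> (\<Sum>x\<in>UNIV. p x) = 1"

definition is_policy :: "('s::finite \<Rightarrow> 'a::finite \<Rightarrow> real) \<Rightarrow> bool" where
  "is_policy pol \<longleftrightarrow> (\<forall>s. is_dist (pol s))"

definition is_kernel :: "('s::finite \<Rightarrow> 'a::finite \<Rightarrow> 's \<Rightarrow> real) \<Rightarrow> bool" where
  "is_kernel P \<longleftrightarrow> (\<forall>s a. is_dist (P s a))"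

definition Ppi :: "('s::finite \<Rightarrow> 'a::finite \<Rightarrow> 's \<Rightarrow> real) \<Rightarrow> ('s \<Rightarrow> 'a \<Rightarrow> real) \<Rightarrow> 's \<Rightarrow> 's \<Rightarrow> real" where
  "Ppi P pol s s' = (\<Sum>a\<in>UNIV. pol s a * P s a s')"

fun mstep :: "('s::finite \<Rightarrow> 's \<Rightarrow> real) \<Rightarrow> nat \<Rightarrow> 's \<Rightarrow> 's \<Rightarrow> real" where
  "mstep Q 0 s s' = (if s = s' then 1 else 0)"
| "mstep Q (Suc n) s s' = (\<Sum>u\<in>UNIV. mstep Q n s u * Q u s')"

definition irreducible_chain :: "('s::finite \<Rightarrow> 's \<Rightarrow> real) \<Rightarrow> bool" where
  "irreducible_chain Q \<longleftrightarrow> (\<forall>s s'. \<exists>n. 0 < mstep Q n s s')"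

definition period :: "('s::finite \<Rightarrow> 's \<Rightarrow> real) \<Rightarrow> 's \<Rightarrow> nat" where
  "period Q s = Gcd {n. 0 < n \<and> 0 < mstep Q n s s}"

definition aperiodic_chain :: "('s::finite \<Rightarrow> 's \<Rightarrow> real) \<Rightarrow> bool" where
  "aperiodic_chain Q \<longleftrightarrow> (\<forall>s. period Q s = 1)"

definition ergodic :: "('s::finite \<Rightarrow> 'a::finite \<Rightarrow> 's \<Rightarrow> real) \<Rightarrow> bool" where
  "ergodic P \<longleftrightarrow> (\<forall>pol. is_policy pol \<longrightarrow>
      irreducible_chain (Ppi P pol) \<and> aperiodic_chain (Ppi P pol))"

definition stationary :: "('s::finite \<Rightarrow> 's \<Rightarrow> real) \<Rightarrow> ('s \<Rightarrow> real) \<Rightarrow> bool" where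
  "stationary Q d \<longleftrightarrow> is_dist d \<and> (\<forall>s'. (\<Sum>s\<in>UNIV. d s * Q s s') = d s')"

text \<open>d^pol : the (unique, under ergodicity) stationary distribution.\<close>
definition statdist :: "('s::finite \<Rightarrow> 'a::finite \<Rightarrow> 's \<Rightarrow> real) \<Rightarrow> ('s \<Rightarrow> 'a \<Rightarrow> real) \<Rightarrow> 's \<Rightarrow> real" where
  "statdist P pol = (THE d. stationary (Ppi P pol) d)"

definition occ :: "('s::finite \<Rightarrow> 'a::finite \<Rightarrow> 's \<Rightarrow> real) \<Rightarrow> ('s \<Rightarrow> 'a \<Rightarrow> real) \<Rightarrow> 's \<Rightarrow> 'a \<Rightarrow> real" where
  "occ P pol s a = statdist P pol s * pol s a"

definition Jv :: "('s::finite \<Rightarrow> 'a::finite \<Rightarrow> 's \<Rightarrow> real) \<Rightarrow> ('s \<Rightarrow> 'a \<Rightarrow> real) \<Rightarrow> ('s \<Rightarrow> 'a \<Rightarrow> real) \<Rightarrow> real" where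
  "Jv P pol g = (\<Sum>s\<in>UNIV. \<Sum>a\<in>UNIV. occ P pol s a * g s a)"

text \<open>Law of (s_t,a_t) under pol started from s_0 = s, a_0 = a.\<close>
fun sadist :: "('s::finite \<Rightarrow> 'a::finite \<Rightarrow> 's \<Rightarrow> real) \<Rightarrow> ('s \<Rightarrow> 'a \<Rightarrow> real) \<Rightarrow> 's \<Rightarrow> 'a \<Rightarrow> nat \<Rightarrow> 's \<Rightarrow> 'a \<Rightarrow> real" where
  "sadist P pol s a 0 s' a' = (if s' = s \<and> a' = a then 1 else 0)"
| "sadist P pol s a (Suc t) s' a' =
     (\<Sum>u\<in>UNIV. \<Sum>b\<in>UNIV. sadist P pol s a t u b * P u b s') * pol s' a'"

definition Qf :: "('s::finite \<Rightarrow> 'a::finite \<Rightarrow> 's \<Rightarrow> real) \<Rightarrow> ('s \<Rightarrow> 'a \<Rightarrow> real) \<Rightarrow> ('s \<Rightarrow> 'a \<Rightarrow> real) \<Rightarrow> 's \<Rightarrow> 'a \<Rightarrow> real" where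
  "Qf P pol g s a = (\<Sum>t. (\<Sum>s'\<in>UNIV. \<Sum>a'\<in>UNIV. sadist P pol s a t s' a' * g s' a') - Jv P pol g)"

definition Vf :: "('s::finite \<Rightarrow> 'a::finite \<Rightarrow> 's \<Rightarrow> real) \<Rightarrow> ('s \<Rightarrow> 'a \<Rightarrow> real) \<Rightarrow> ('s \<Rightarrow> 'a \<Rightarrow> real) \<Rightarrow> 's \<Rightarrow> real" where
  "Vf P pol g s = (\<Sum>a\<in>UNIV. pol s a * Qf P pol g s a)"

definition Adv :: "('s::finite \<Rightarrow> 'a::finite \<Rightarrow> 's \<Rightarrow> real) \<Rightarrow> ('s \<Rightarrow> 'a \<Rightarrow> real) \<Rightarrow> ('s \<Rightarrow> 'a \<Rightarrow> real) \<Rightarrow> 's \<Rightarrow> 'a \<Rightarrow> real" where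
  "Adv P pol g s a = Qf P pol g s a - Vf P pol g s"

definition Lagr :: "('s::finite \<Rightarrow> 'a::finite \<Rightarrow> 's \<Rightarrow> real) \<Rightarrow> ('s \<Rightarrow> 'a \<Rightarrow> real) \<Rightarrow> ('s \<Rightarrow> 'a \<Rightarrow> real) \<Rightarrow> ('s \<Rightarrow> 'a \<Rightarrow> real) \<Rightarrow> real \<Rightarrow> real" where
  "Lagr P r c pol lam = Jv P pol r + lam * Jv P pol c"

definition grad :: "(real^'d \<Rightarrow> real) \<Rightarrow> real^'d \<Rightarrow> real^'d" where
  "grad f x = (\<chi> i. frechet_derivative f (at x) (axis i 1))"

definition score :: "(real^'d \<Rightarrow> 's \<Rightarrow> 'a \<Rightarrow> real) \<Rightarrow> real^'d \<Rightarrow> 's \<Rightarrow> 'a \<Rightarrow> real^'d" where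
  "score pol th s a = grad (\<lambda>t. ln (pol t s a)) th"

definition fisher :: "('s::finite \<Rightarrow> 'a::finite \<Rightarrow> 's \<Rightarrow> real) \<Rightarrow> (real^'d \<Rightarrow> 's \<Rightarrow> 'a \<Rightarrow> real) \<Rightarrow> real^'d \<Rightarrow> real^'d^'d" where
  "fisher P pol th = (\<chi> i j. \<Sum>s\<in>UNIV. \<Sum>a\<in>UNIV.
       occ P (pol th) s a * (score pol th s a $ i) * (score pol th s a $ j))"

definition mat_inverse :: "real^'n^'n \<Rightarrow> real^'n^'n" where
  "mat_inverse A = (SOME B. A ** B = mat 1 \<and> B ** A = mat 1)"

definition natgrad :: "('s::finite \<Rightarrow> 'a::finite \<Rightarrow> 's \<Rightarrow> real) \<Rightarrow> ('s \<Rightarrow> 'a \<Rightarrow> real) \<Rightarrow> ('s \<Rightarrow> 'a \<Rightarrow> real)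
     \<Rightarrow> (real^'d \<Rightarrow> 's \<Rightarrow> 'a \<Rightarrow> real) \<Rightarrow> real^'d \<Rightarrow> real \<Rightarrow> real^'d" where
  "natgrad P r c pol th lam =
     mat_inverse (fisher P pol th) *v grad (\<lambda>t. Lagr P r c (pol t) lam) th"

definition KL :: "('a::finite \<Rightarrow> real) \<Rightarrow> ('a \<Rightarrow> real) \<Rightarrow> real" where
  "KL p q = (\<Sum>a\<in>UNIV. if p a = 0 then 0 else p a * ln (p a / q a))"

definition KL_term :: "('s::finite \<Rightarrow> 'a::finite \<Rightarrow> 's \<Rightarrow> real) \<Rightarrow> ('s \<Rightarrow> 'a \<Rightarrow> real) \<Rightarrow> ('s \<Rightarrow> 'a \<Rightarrow> real) \<Rightarrow> real" where
  "KL_term P pistar pi0 = (\<Sum>s\<in>UNIV. statdist P pistar s * KL (pistar s) (pi0 s))"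

end

theory Submission
  imports Defs
begin

text \<open>
  The bound is the mirror descent argument for natural policy gradient, with the potential
  \<open>\<Phi>(\<theta>) = KL_term P pistar (pol \<theta>)\<close>, the \<open>d\<^sup>\<pi>\<^sup>*\<close>-mean of \<open>KL(\<pi>*(.|s) || \<pi>\<^sub>\<theta>(.|s))\<close>.
  By the performance difference lemma (which for an ergodic average-reward CMDP follows from the
  Bellman equation for \<open>Q\<close>, itself a consequence of the geometric mixing of every state chain),
  the Lagrangian gap \<open>L(\<pi>*, \<lambda>) - L(\<theta>, \<lambda>)\<close> is the \<open>\<nu>*\<close>-mean of the combined advantage;
  the compatible approximation replaces it, up to \<open>sqrt eps_bias\<close>, by \<open>\<langle>m(\<theta>), \<omega>*\<rangle>\<close>, where
  \<open>m(\<theta>)\<close> is the \<open>\<nu>*\<close>-mean of the score.  Smoothness of \<open>log \<pi>\<^sub>\<theta>\<close> shows that a step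
  \<open>\<theta> + \<alpha> \<omega>\<close> decreases \<open>\<Phi>\<close> by at least \<open>\<alpha> \<langle>m(\<theta>), \<omega>\<rangle> - \<alpha>\<^sup>2 G2/2 \<parallel>\<omega>\<parallel>\<^sup>2\<close>.
  Splitting \<open>\<omega> = E\<^sub>k \<omega> + (\<omega> - E\<^sub>k \<omega>)\<close>, the second part has zero mean because \<open>m(\<theta>\<^sub>k)\<close> is bounded
  and \<open>F\<^sub>k\<close>-measurable, and replacing \<open>\<omega>*\<close> by \<open>E\<^sub>k \<omega>\<close> costs at most \<open>G1 \<parallel>E\<^sub>k \<omega> - \<omega>*\<parallel>\<close>.
  Summing over \<open>k\<close> telescopes \<open>\<Phi>\<close>, which is nonnegative.
\<close>

section \<open>Finite Markov chains\<close>

definition stochastic :: "('s::finite \<Rightarrow> 's \<Rightarrow> real) \<Rightarrow> bool" where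
  "stochastic Q \<longleftrightarrow> (\<forall>s. is_dist (Q s))"

lemma sum_delta_mult [simp]:
  fixes f :: "'b::finite \<Rightarrow> real"
  shows "(\<Sum>u\<in>UNIV. (if s = u then 1 else 0) * f u) = f s"
  by (simp flip: of_bool_def)

lemma sum_mult_sum_swap:
  fixes a :: "'j::finite \<Rightarrow> real" and b :: "'j \<Rightarrow> 'i::finite \<Rightarrow> real"
  shows "(\<Sum>i\<in>UNIV. \<Sum>j\<in>UNIV. a j * b j i) = (\<Sum>j\<in>UNIV. a j * (\<Sum>i\<in>UNIV. b j i))"
  by (subst sum.swap) (simp add: sum_distrib_left)

lemma is_dist_mstep:
  assumes "stochastic Q"
  shows "is_dist (mstep Q n s)"
proof (induction n)
  case 0
  show ?case by (simp add: is_dist_def)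
next
  case (Suc n)
  have "(\<Sum>s'\<in>UNIV. mstep Q (Suc n) s s') = (\<Sum>u\<in>UNIV. mstep Q n s u * (\<Sum>s'\<in>UNIV. Q u s'))"
    by (simp add: sum_mult_sum_swap)
  also have "\<dots> = 1"
    using Suc assms by (simp add: stochastic_def is_dist_def)
  finally show ?case
    using Suc assms by (auto simp: is_dist_def stochastic_def intro!: sum_nonneg)
qed

lemma mstep_nonneg: "stochastic Q \<Longrightarrow> 0 \<le> mstep Q n s s'"
  using is_dist_mstep by (auto simp: is_dist_def)

lemma mstep_add: "mstep Q (m + n) s s' = (\<Sum>u\<in>UNIV. mstep Q m s u * mstep Q n u s')"
proof (induction n arbitrary: s')
  case 0
  show ?case by (simp add: if_distrib cong: if_cong)
next
  case (Suc n)
  have "mstep Q (m + Suc n) s s' = (\<Sum>v\<in>UNIV. \<Sum>u\<in>UNIV. mstep Q m s u * (mstep Q n u v * Q v s'))"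
    using Suc by (simp add: sum_distrib_right mult.assoc)
  also have "\<dots> = (\<Sum>u\<in>UNIV. mstep Q m s u * mstep Q (Suc n) u s')"
    by (simp add: sum_mult_sum_swap)
  finally show ?case .
qed

lemma mstep_Suc_left: "mstep Q (Suc n) s s' = (\<Sum>u\<in>UNIV. Q s u * mstep Q n u s')"
  using mstep_add[of Q 1 n] by simp

lemma mstep_mult_le:
  assumes "stochastic Q"
  shows "mstep Q m s u * mstep Q n u s' \<le> mstep Q (m + n) s s'"
  unfolding mstep_add
  by (rule member_le_sum) (auto intro: mult_nonneg_nonneg mstep_nonneg assms)

definition evolve :: "('s::finite \<Rightarrow> 's \<Rightarrow> real) \<Rightarrow> ('s \<Rightarrow> real) \<Rightarrow> nat \<Rightarrow> 's \<Rightarrow> real" where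
  "evolve Q x n s' = (\<Sum>s\<in>UNIV. x s * mstep Q n s s')"

lemma evolve_0 [simp]: "evolve Q x 0 = x"
  by (simp add: evolve_def fun_eq_iff if_distrib cong: if_cong)

lemma evolve_add: "evolve Q x (m + n) = evolve Q (evolve Q x m) n"
proof
  fix s'
  have "evolve Q x (m + n) s' = (\<Sum>u\<in>UNIV. \<Sum>s\<in>UNIV. x s * mstep Q m s u * mstep Q n u s')"
    by (subst sum.swap) (simp add: evolve_def mstep_add sum_distrib_left mult.assoc)
  also have "\<dots> = evolve Q (evolve Q x m) n s'"
    by (simp add: evolve_def sum_distrib_right)
  finally show "evolve Q x (m + n) s' = evolve Q (evolve Q x m) n s'" .
qed

lemma evolve_Suc: "evolve Q x (Suc n) s' = (\<Sum>u\<in>UNIV. evolve Q x n u * Q u s')"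
  using evolve_add[of Q x n 1] by (simp add: evolve_def sum_distrib_right)

lemma evolve_diff: "evolve Q (\<lambda>s. x s - y s) n s' = evolve Q x n s' - evolve Q y n s'"
  by (simp add: evolve_def left_diff_distrib sum_subtractf)

lemma evolve_stationary: "stationary Q d \<Longrightarrow> evolve Q d n = d"
  by (induction n) (simp_all add: fun_eq_iff evolve_Suc stationary_def)

lemma sum_evolve:
  assumes "stochastic Q"
  shows "(\<Sum>s\<in>UNIV. evolve Q x n s) = (\<Sum>s\<in>UNIV. x s)"
  using is_dist_mstep[OF assms] unfolding evolve_def by (simp add: sum_mult_sum_swap is_dist_def)

lemma evolve_l1_le:
  assumes "stochastic Q"
  shows "(\<Sum>s\<in>UNIV. \<bar>evolve Q x n s\<bar>) \<le> (\<Sum>s\<in>UNIV. \<bar>x s\<bar>)"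
proof -
  have "(\<Sum>s'\<in>UNIV. \<bar>evolve Q x n s'\<bar>) \<le> (\<Sum>s'\<in>UNIV. \<Sum>s\<in>UNIV. \<bar>x s\<bar> * mstep Q n s s')"
    unfolding evolve_def
    by (intro sum_mono order_trans[OF sum_abs]) (simp add: abs_mult mstep_nonneg[OF assms])
  also have "\<dots> = (\<Sum>s\<in>UNIV. \<bar>x s\<bar>)"
    using is_dist_mstep[OF assms] by (simp add: sum_mult_sum_swap is_dist_def)
  finally show ?thesis .
qed

text \<open>Doeblin's argument: subtracting the uniform lower bound \<open>\<beta>\<close> from every entry of \<open>Q\<^sup>N\<close>
  does not change the image of a zero-sum vector, and leaves rows of total mass \<open>1 - CARD('s) \<beta>\<close>.\<close>
lemma evolve_contraction:
  fixes Q :: "'s::finite \<Rightarrow> 's \<Rightarrow> real"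
  assumes Q: "stochastic Q" and lower: "\<forall>s s'. \<beta> \<le> mstep Q N s s'" and x: "(\<Sum>s\<in>UNIV. x s) = 0"
  shows "(\<Sum>s'\<in>UNIV. \<bar>evolve Q x N s'\<bar>) \<le> (1 - real CARD('s) * \<beta>) * (\<Sum>s\<in>UNIV. \<bar>x s\<bar>)"
proof -
  have shift: "evolve Q x N s' = (\<Sum>s\<in>UNIV. x s * (mstep Q N s s' - \<beta>))" for s'
    using x by (simp add: evolve_def right_diff_distrib sum_subtractf flip: sum_distrib_right)
  have "(\<Sum>s'\<in>UNIV. \<bar>evolve Q x N s'\<bar>) \<le> (\<Sum>s'\<in>UNIV. \<Sum>s\<in>UNIV. \<bar>x s\<bar> * (mstep Q N s s' - \<beta>))"
    unfolding shift by (intro sum_mono order_trans[OF sum_abs]) (simp add: abs_mult lower)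
  also have "\<dots> = (\<Sum>s\<in>UNIV. \<bar>x s\<bar> * (1 - real CARD('s) * \<beta>))"
    using is_dist_mstep[OF Q] by (simp add: sum_mult_sum_swap sum_subtractf is_dist_def)
  finally show ?thesis
    by (simp add: sum_distrib_right mult.commute)
qed

lemma add_closed_insert_0:
  fixes S :: "nat set"
  assumes "\<forall>m\<in>S. \<forall>n\<in>S. m + n \<in> S" "a \<in> insert 0 S" "b \<in> insert 0 S"
  shows "a + b \<in> insert 0 S"
  using assms by auto

lemma add_closed_multiple:
  fixes S :: "nat set"
  assumes add: "\<forall>m\<in>S. \<forall>n\<in>S. m + n \<in> S" and m: "m \<in> insert 0 S"
  shows "k * m \<in> insert 0 S"
proof (induction k)
  case (Suc k)
  have "m + k * m \<in> insert 0 S"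
    by (rule add_closed_insert_0[OF add m Suc])
  then show ?case
    by simp
qed simp

lemma add_closed_gcd_one_consecutive:
  fixes S :: "nat set"
  assumes add: "\<forall>m\<in>S. \<forall>n\<in>S. m + n \<in> S" and gcd: "Gcd S = 1"
  obtains v where "v \<in> insert 0 S" "v + 1 \<in> insert 0 S"
proof -
  let ?S0 = "insert 0 S"
  define D where "D = {g. 0 < g \<and> (\<exists>v\<in>?S0. v + g \<in> ?S0)}"
  have "\<not> S \<subseteq> {0}"
    using gcd by (auto simp: Gcd_0_iff[symmetric])
  then obtain s1 where "s1 \<in> S" "s1 \<noteq> 0"
    by blast
  then have "s1 \<in> D"
    by (force simp: D_def)
  define g where "g = (LEAST g. g \<in> D)"
  have "g \<in> D"
    unfolding g_def by (rule LeastI) fact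
  then obtain v where v: "v \<in> ?S0" "v + g \<in> ?S0" "0 < g"
    unfolding D_def by blast
  have "g dvd s" if s: "s \<in> S" for s
  proof (rule ccontr)
    assume "\<not> g dvd s"
    then have pos: "0 < s mod g"
      by (simp add: mod_eq_0_iff_dvd[symmetric])
    \<comment> \<open>\<open>s + q v\<close> exceeds \<open>q (v + g)\<close> by the remainder, contradicting the minimality of \<open>g\<close>\<close>
    have eq: "(s div g) * (v + g) + s mod g = s + (s div g) * v"
      by (simp add: algebra_simps)
    have "s + (s div g) * v \<in> ?S0"
      using s by (intro add_closed_insert_0[OF add] add_closed_multiple[OF add v(1)]) auto
    then have "\<exists>v'\<in>?S0. v' + s mod g \<in> ?S0"
      by (intro bexI[OF _ add_closed_multiple[OF add v(2), where k = "s div g"]]) (simp only: eq)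
    then have "s mod g \<in> D"
      using pos unfolding D_def by blast
    then have "g \<le> s mod g"
      unfolding g_def by (rule Least_le)
    then show False
      using v(3) by (meson mod_less_divisor not_le)
  qed
  then have "g dvd Gcd S"
    by (rule Gcd_greatest)
  then have "g = 1"
    using gcd by simp
  then show thesis
    using that v by simp
qed

lemma add_closed_gcd_one_eventually:
  fixes S :: "nat set"
  assumes add: "\<forall>m\<in>S. \<forall>n\<in>S. m + n \<in> S" and gcd: "Gcd S = 1"
  shows "\<exists>N. \<forall>n\<ge>N. n \<in> S"
proof -
  obtain v where v: "v \<in> insert 0 S" "v + 1 \<in> insert 0 S"
    using add_closed_gcd_one_consecutive[OF assms] by blast
  have "n \<in> S" if n: "v * v < n" for n
  proof -
    have "(n div v - n mod v) * v + n mod v * (v + 1) = n"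
    proof (cases "v = 0")
      case False
      then have "v \<le> n div v" "n mod v < v"
        using n by (simp_all add: less_eq_div_iff_mult_less_eq)
      then show ?thesis
        by (simp add: algebra_simps diff_mult_distrib)
    qed simp
    moreover have "(n div v - n mod v) * v + n mod v * (v + 1) \<in> insert 0 S"
      by (intro add_closed_insert_0[OF add] add_closed_multiple[OF add] v)
    ultimately show ?thesis
      using n by auto
  qed
  then show ?thesis
    by (meson Suc_le_lessD)
qed

lemma aperiodic_eventually_return:
  assumes Q: "stochastic Q" and ap: "aperiodic_chain Q"
  shows "\<exists>N. \<forall>n\<ge>N. 0 < mstep Q n s s"
proof -
  let ?S = "{n. 0 < n \<and> 0 < mstep Q n s s}"
  have "m + n \<in> ?S" if "m \<in> ?S" "n \<in> ?S" for m n
  proof -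
    have "0 < mstep Q m s s * mstep Q n s s"
      using that by simp
    also have "\<dots> \<le> mstep Q (m + n) s s"
      by (rule mstep_mult_le[OF Q])
    finally show ?thesis
      using that by simp
  qed
  moreover have "Gcd ?S = 1"
    using ap by (simp add: aperiodic_chain_def period_def)
  ultimately show ?thesis
    using add_closed_gcd_one_eventually[of ?S] by blast
qed

lemma irreducible_aperiodic_primitive:
  fixes Q :: "'s::finite \<Rightarrow> 's \<Rightarrow> real"
  assumes Q: "stochastic Q" and irr: "irreducible_chain Q" and ap: "aperiodic_chain Q"
  shows "\<exists>N>0. \<forall>s s'. 0 < mstep Q N s s'"
proof -
  fix s0 :: 's
  obtain N0 where N0: "\<forall>n\<ge>N0. 0 < mstep Q n s0 s0"
    using aperiodic_eventually_return[OF Q ap] by blast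
  obtain into out where
    into: "\<And>s. 0 < mstep Q (into s) s s0" and out: "\<And>s. 0 < mstep Q (out s) s0 s"
    using irr choice[of "\<lambda>s n. 0 < mstep Q n s s0"] choice[of "\<lambda>s n. 0 < mstep Q n s0 s"]
    unfolding irreducible_chain_def by blast
  define N where "N = Suc N0 + Max (range into) + Max (range out)"
  \<comment> \<open>go from \<open>s\<close> to \<open>s0\<close>, wait at \<open>s0\<close> for at least \<open>N0\<close> steps, then go to \<open>s'\<close>\<close>
  have "0 < mstep Q N s s'" for s s'
  proof -
    define wait where "wait = N - into s - out s'"
    have "into s \<le> Max (range into)" "out s' \<le> Max (range out)"
      by (auto intro: Max_ge)
    then have wait: "N0 \<le> wait" "N = into s + (wait + out s')"
      unfolding wait_def N_def by linarith+
    have "0 < mstep Q (into s) s s0 * (mstep Q wait s0 s0 * mstep Q (out s') s0 s')"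
      using N0 wait(1) into out by (simp add: mult_pos_pos)
    also have "\<dots> \<le> mstep Q (into s) s s0 * mstep Q (wait + out s') s0 s'"
      by (rule mult_left_mono[OF mstep_mult_le[OF Q] mstep_nonneg[OF Q]])
    also have "\<dots> \<le> mstep Q N s s'"
      unfolding wait(2) by (rule mstep_mult_le[OF Q])
    finally show ?thesis .
  qed
  moreover have "0 < N"
    by (simp add: N_def)
  ultimately show ?thesis
    by blast
qed

definition l1_mixing_rate :: "('s::finite \<Rightarrow> 's \<Rightarrow> real) \<Rightarrow> (nat \<Rightarrow> real) \<Rightarrow> bool" where
  "l1_mixing_rate Q \<gamma> \<longleftrightarrow> summable \<gamma> \<and> (\<forall>n. 0 \<le> \<gamma> n) \<and>
     (\<forall>x n. (\<Sum>s\<in>UNIV. x s) = 0 \<longrightarrow>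
        (\<Sum>s\<in>UNIV. \<bar>evolve Q x n s\<bar>) \<le> \<gamma> n * (\<Sum>s\<in>UNIV. \<bar>x s\<bar>))"

lemma summable_power_div:
  fixes \<rho> :: real
  assumes "0 < \<rho>" "\<rho> < 1" "0 < N"
  shows "summable (\<lambda>n. \<rho> ^ (n div N))"
proof (rule summable_comparison_test')
  define r where "r = root N \<rho>"
  have r: "0 < r" "r < 1" "r ^ N = \<rho>"
    using assms by (simp_all add: r_def real_root_pow_pos2)
  show "summable (\<lambda>n. r ^ n / \<rho>)"
    using r by (simp add: summable_divide summable_geometric)
  fix n
  have "r ^ n = r ^ (N * (n div N) + n mod N)"
    by simp
  also have "\<dots> = \<rho> ^ (n div N) * r ^ (n mod N)"
    by (simp only: power_add power_mult r(3))
  finally have eq: "r ^ n = \<rho> ^ (n div N) * r ^ (n mod N)" .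
  have "\<rho> \<le> r ^ (n mod N)"
    unfolding r(3)[symmetric] using r assms(3) by (intro power_decreasing) auto
  then have "\<rho> ^ (n div N) * \<rho> \<le> r ^ n"
    unfolding eq using assms by (intro mult_left_mono) auto
  then show "norm (\<rho> ^ (n div N)) \<le> r ^ n / \<rho>"
    using assms by (simp add: field_simps)
qed

lemma evolve_l1_geometric:
  fixes Q :: "'s::finite \<Rightarrow> 's \<Rightarrow> real"
  assumes Q: "stochastic Q" and N: "0 < N" and lower: "\<forall>s s'. \<beta> \<le> mstep Q N s s'"
    and x: "(\<Sum>s\<in>UNIV. x s) = 0"
  shows "(\<Sum>s\<in>UNIV. \<bar>evolve Q x n s\<bar>) \<le> (1 - real CARD('s) * \<beta>) ^ (n div N) * (\<Sum>s\<in>UNIV. \<bar>x s\<bar>)"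
  using x
proof (induction n arbitrary: x rule: less_induct)
  case (less n)
  show ?case
  proof (cases "n < N")
    case True
    then show ?thesis
      using evolve_l1_le[OF Q] by simp
  next
    case False
    fix s0 :: 's
    have "real CARD('s) * \<beta> \<le> (\<Sum>s'\<in>UNIV. mstep Q N s0 s')"
      using lower sum_mono[of UNIV "\<lambda>_. \<beta>" "mstep Q N s0"] by simp
    then have \<rho>: "0 \<le> 1 - real CARD('s) * \<beta>"
      using is_dist_mstep[OF Q] by (simp add: is_dist_def)
    define y where "y = evolve Q x (n - N)"
    have "evolve Q x n = evolve Q y N"
      using False evolve_add[of Q x "n - N" N] by (simp add: y_def)
    moreover have "(\<Sum>s\<in>UNIV. y s) = 0"
      using sum_evolve[OF Q] less.prems by (simp add: y_def)
    ultimately have "(\<Sum>s\<in>UNIV. \<bar>evolve Q x n s\<bar>) \<le> (1 - real CARD('s) * \<beta>) * (\<Sum>s\<in>UNIV. \<bar>y s\<bar>)"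
      using evolve_contraction[OF Q lower] by simp
    also have "\<dots> \<le> (1 - real CARD('s) * \<beta>) *
        ((1 - real CARD('s) * \<beta>) ^ ((n - N) div N) * (\<Sum>s\<in>UNIV. \<bar>x s\<bar>))"
      unfolding y_def using N False less.prems \<rho> by (intro mult_left_mono less.IH) auto
    also have "\<dots> = (1 - real CARD('s) * \<beta>) ^ (n div N) * (\<Sum>s\<in>UNIV. \<bar>x s\<bar>)"
      using le_div_geq[OF N] False by simp
    finally show ?thesis .
  qed
qed

lemma irreducible_aperiodic_mixing:
  fixes Q :: "'s::finite \<Rightarrow> 's \<Rightarrow> real"
  assumes Q: "stochastic Q" and irr: "irreducible_chain Q" and ap: "aperiodic_chain Q"
  shows "\<exists>\<gamma>. l1_mixing_rate Q \<gamma>"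
proof -
  obtain N where N: "0 < N" "\<forall>s s'. 0 < mstep Q N s s'"
    using irreducible_aperiodic_primitive[OF Q irr ap] by blast
  define \<beta> where "\<beta> = Min (range (\<lambda>(s, s'). mstep Q N s s')) / 2"
  have "0 < \<beta>"
    using N(2) by (auto simp: \<beta>_def Min_gr_iff)
  moreover have "\<forall>s s'. 2 * \<beta> \<le> mstep Q N s s'"
    by (auto simp: \<beta>_def intro!: Min_le image_eqI[where x = "(s, s')" for s s'])
  ultimately have \<beta>: "0 < \<beta>" "\<forall>s s'. 2 * \<beta> \<le> mstep Q N s s'" .
  fix s0 :: 's
  \<comment> \<open>halving the minimal entry keeps the contraction factor in \<open>[1/2, 1)\<close>\<close>
  have "real CARD('s) * (2 * \<beta>) \<le> (\<Sum>s'\<in>UNIV. mstep Q N s0 s')"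
    using \<beta>(2) sum_mono[of UNIV "\<lambda>_. 2 * \<beta>" "mstep Q N s0"] by simp
  then have "real CARD('s) * \<beta> \<le> 1 / 2"
    using is_dist_mstep[OF Q] by (simp add: is_dist_def)
  moreover have "0 < real CARD('s) * \<beta>"
    using \<beta>(1) by simp
  ultimately have "summable (\<lambda>n. (1 - real CARD('s) * \<beta>) ^ (n div N))"
    using N(1) by (intro summable_power_div) auto
  moreover have "\<forall>s s'. \<beta> \<le> mstep Q N s s'"
  proof (intro allI)
    fix s s'
    show "\<beta> \<le> mstep Q N s s'"
      using \<beta>(1) \<beta>(2)[rule_format, of s s'] by linarith
  qed
  ultimately have "l1_mixing_rate Q (\<lambda>n. (1 - real CARD('s) * \<beta>) ^ (n div N))"
    unfolding l1_mixing_rate_def using \<open>real CARD('s) * \<beta> \<le> 1 / 2\<close> evolve_l1_geometric[OF Q N(1)]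
    by simp
  then show ?thesis
    by blast
qed

lemma mixing_stationary_unique:
  assumes mix: "l1_mixing_rate Q \<gamma>" and d1: "stationary Q d1" and d2: "stationary Q d2"
  shows "d1 = d2"
proof -
  define z where "z = (\<lambda>s. d1 s - d2 s)"
  have "(\<Sum>s\<in>UNIV. z s) = 0"
    using d1 d2 by (simp add: z_def stationary_def is_dist_def sum_subtractf)
  moreover have "evolve Q z n = z" for n
    unfolding z_def by (simp add: fun_eq_iff evolve_diff evolve_stationary[OF d1] evolve_stationary[OF d2])
  ultimately have le: "(\<Sum>s\<in>UNIV. \<bar>z s\<bar>) \<le> \<gamma> n * (\<Sum>s\<in>UNIV. \<bar>z s\<bar>)" for n
    using mix unfolding l1_mixing_rate_def by metis
  have "\<gamma> \<longlonglongrightarrow> 0"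
    using mix by (simp add: l1_mixing_rate_def summable_LIMSEQ_zero)
  then obtain n where "\<gamma> n < 1"
    using order_tendstoD(2)[of \<gamma> 0 sequentially 1] by (auto dest: eventually_happens)
  then have "\<not> 0 < (\<Sum>s\<in>UNIV. \<bar>z s\<bar>)"
    using le[of n] by (simp add: mult_le_cancel_right1)
  then have "(\<Sum>s\<in>UNIV. \<bar>z s\<bar>) = 0"
    by (simp add: antisym sum_nonneg)
  then show ?thesis
    using sum_nonneg_eq_0_iff[of UNIV "\<lambda>s. \<bar>z s\<bar>"] by (simp add: fun_eq_iff z_def)
qed

lemma mixing_mstep_convergent:
  assumes Q: "stochastic Q" and mix: "l1_mixing_rate Q \<gamma>"
  shows "convergent (\<lambda>n. mstep Q n s0 s)"
proof -
  define w where "w s' = Q s0 s' - (if s0 = s' then 1 else 0)" for s'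
  \<comment> \<open>the increments \<open>Q\<^sup>n\<^sup>+\<^sup>1(s0,s) - Q\<^sup>n(s0,s)\<close> are the entries of \<open>w Q\<^sup>n\<close> for the zero-sum vector \<open>w\<close>\<close>
  have incr: "mstep Q (Suc n) s0 s - mstep Q n s0 s = evolve Q w n s" for n
    by (simp add: w_def evolve_def left_diff_distrib sum_subtractf mstep_Suc_left del: mstep.simps)
  have "(\<Sum>s'\<in>UNIV. w s') = 0"
    using Q by (simp add: w_def sum_subtractf stochastic_def is_dist_def)
  then have "norm (evolve Q w n s) \<le> \<gamma> n * (\<Sum>s'\<in>UNIV. \<bar>w s'\<bar>)" for n
  proof -
    have "norm (evolve Q w n s) \<le> (\<Sum>s'\<in>UNIV. \<bar>evolve Q w n s'\<bar>)"
      by (auto intro: member_le_sum)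
    also have "\<dots> \<le> \<gamma> n * (\<Sum>s'\<in>UNIV. \<bar>w s'\<bar>)"
      using mix \<open>(\<Sum>s'\<in>UNIV. w s') = 0\<close> unfolding l1_mixing_rate_def by blast
    finally show ?thesis .
  qed
  moreover have "summable (\<lambda>n. \<gamma> n * (\<Sum>s'\<in>UNIV. \<bar>w s'\<bar>))"
    using mix by (simp add: l1_mixing_rate_def summable_mult2)
  ultimately have "summable (\<lambda>n. mstep Q (Suc n) s0 s - mstep Q n s0 s)"
    unfolding incr by (rule summable_comparison_test'[where N = 0, rotated])
  then have "convergent (\<lambda>n. mstep Q 0 s0 s + (\<Sum>i<n. mstep Q (Suc i) s0 s - mstep Q i s0 s))"
    by (intro convergent_add convergent_const summable_iff_convergent[THEN iffD1])
  moreover have "mstep Q 0 s0 s + (\<Sum>i<n. mstep Q (Suc i) s0 s - mstep Q i s0 s) = mstep Q n s0 s" for n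
    using sum_lessThan_telescope[of "\<lambda>i. mstep Q i s0 s" n] by simp
  ultimately show ?thesis
    by simp
qed

lemma mixing_stationary_limit:
  assumes Q: "stochastic Q" and mix: "l1_mixing_rate Q \<gamma>"
  shows "stationary Q (\<lambda>s. lim (\<lambda>n. mstep Q n s0 s))"
proof -
  define d where "d s = lim (\<lambda>n. mstep Q n s0 s)" for s
  have lim: "(\<lambda>n. mstep Q n s0 s) \<longlonglongrightarrow> d s" for s
    unfolding d_def using mixing_mstep_convergent[OF Q mix] convergent_LIMSEQ_iff by blast
  have "0 \<le> d s" for s
    by (rule LIMSEQ_le_const[OF lim]) (simp add: mstep_nonneg[OF Q])
  moreover have "(\<lambda>n. \<Sum>s\<in>UNIV. mstep Q n s0 s) \<longlonglongrightarrow> (\<Sum>s\<in>UNIV. d s)"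
    by (intro tendsto_sum lim)
  then have "(\<lambda>n. 1) \<longlonglongrightarrow> (\<Sum>s\<in>UNIV. d s)"
    using is_dist_mstep[OF Q] by (simp add: is_dist_def)
  then have "(\<Sum>s\<in>UNIV. d s) = 1"
    by (rule LIMSEQ_unique[OF tendsto_const, symmetric])
  moreover have "(\<Sum>s\<in>UNIV. d s * Q s s') = d s'" for s'
  proof (rule LIMSEQ_unique)
    show "(\<lambda>n. \<Sum>s\<in>UNIV. mstep Q n s0 s * Q s s') \<longlonglongrightarrow> (\<Sum>s\<in>UNIV. d s * Q s s')"
      by (intro tendsto_sum tendsto_mult_right lim)
    show "(\<lambda>n. \<Sum>s\<in>UNIV. mstep Q n s0 s * Q s s') \<longlonglongrightarrow> d s'"
      using LIMSEQ_Suc[OF lim[of s']] by simp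
  qed
  ultimately show ?thesis
    by (simp add: stationary_def is_dist_def d_def)
qed

lemma stochastic_Ppi:
  assumes "is_kernel P" "is_policy p"
  shows "stochastic (Ppi P p)"
proof -
  have "(\<Sum>s'\<in>UNIV. Ppi P p s s') = (\<Sum>a\<in>UNIV. p s a * (\<Sum>s'\<in>UNIV. P s a s'))" for s
    unfolding Ppi_def by (rule sum_mult_sum_swap)
  moreover have "0 \<le> Ppi P p s s'" for s s'
    using assms unfolding Ppi_def is_kernel_def is_policy_def is_dist_def by (simp add: sum_nonneg)
  ultimately show ?thesis
    using assms by (simp add: stochastic_def is_dist_def is_kernel_def is_policy_def)
qed

lemma ergodic_mixing:
  assumes "is_kernel P" "ergodic P" "is_policy p"
  shows "\<exists>\<gamma>. l1_mixing_rate (Ppi P p) \<gamma>"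
  using assms(2,3) unfolding ergodic_def
  by (blast intro: irreducible_aperiodic_mixing stochastic_Ppi[OF assms(1,3)])

lemma statdist_eq_limit:
  assumes "is_kernel P" "ergodic P" "is_policy p"
  shows "statdist P p = (\<lambda>s'. lim (\<lambda>n. mstep (Ppi P p) n s s'))"
proof -
  obtain \<gamma> where mix: "l1_mixing_rate (Ppi P p) \<gamma>"
    using ergodic_mixing[OF assms] by blast
  have st: "stationary (Ppi P p) (\<lambda>s'. lim (\<lambda>n. mstep (Ppi P p) n s s'))"
    by (rule mixing_stationary_limit[OF stochastic_Ppi[OF assms(1,3)] mix])
  show ?thesis
    unfolding statdist_def
    by (rule the_equality[where P = "stationary (Ppi P p)", OF st]) (rule mixing_stationary_unique[OF mix _ st])
qed

lemma stationary_statdist: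
  assumes "is_kernel P" "ergodic P" "is_policy p"
  shows "stationary (Ppi P p) (statdist P p)"
proof -
  obtain \<gamma> where mix: "l1_mixing_rate (Ppi P p) \<gamma>"
    using ergodic_mixing[OF assms] by blast
  fix s
  show ?thesis
    unfolding statdist_eq_limit[OF assms, of s]
    by (rule mixing_stationary_limit[OF stochastic_Ppi[OF assms(1,3)] mix])
qed

lemma mstep_tendsto_statdist:
  assumes "is_kernel P" "ergodic P" "is_policy p"
  shows "(\<lambda>n. mstep (Ppi P p) n s s') \<longlonglongrightarrow> statdist P p s'"
proof -
  obtain \<gamma> where mix: "l1_mixing_rate (Ppi P p) \<gamma>"
    using ergodic_mixing[OF assms] by blast
  have "convergent (\<lambda>n. mstep (Ppi P p) n s s')"
    by (rule mixing_mstep_convergent[OF stochastic_Ppi[OF assms(1,3)] mix])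
  then show ?thesis
    unfolding statdist_eq_limit[OF assms, of s] by (simp add: convergent_LIMSEQ_iff)
qed

section \<open>Bellman equation and performance difference\<close>

lemma sum_mult_diff_const:
  "(\<Sum>i\<in>A. w i) = 1 \<Longrightarrow> (\<Sum>i\<in>A. w i * (f i - c)) = (\<Sum>i\<in>A. w i * f i) - (c::real)"
  by (simp add: right_diff_distrib sum_subtractf flip: sum_distrib_right)

lemma abs_sum_mult_le:
  fixes x y :: "'s::finite \<Rightarrow> real"
  shows "\<bar>\<Sum>v\<in>UNIV. x v * y v\<bar> \<le> (\<Sum>v\<in>UNIV. \<bar>x v\<bar>) * (\<Sum>v\<in>UNIV. \<bar>y v\<bar>)"
proof -
  have "\<bar>\<Sum>v\<in>UNIV. x v * y v\<bar> \<le> (\<Sum>v\<in>UNIV. \<bar>x v\<bar> * \<bar>y v\<bar>)"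
    by (rule order_trans[OF sum_abs]) (simp add: abs_mult)
  also have "\<dots> \<le> (\<Sum>v\<in>UNIV. (\<Sum>w\<in>UNIV. \<bar>x w\<bar>) * \<bar>y v\<bar>)"
    by (intro sum_mono mult_right_mono member_le_sum) auto
  finally show ?thesis
    by (simp add: sum_distrib_left)
qed

lemma sum_policy: "is_policy p \<Longrightarrow> (\<Sum>a\<in>UNIV. p s a) = 1"
  by (simp add: is_policy_def is_dist_def)

lemma sum_kernel: "is_kernel P \<Longrightarrow> (\<Sum>u\<in>UNIV. P s a u) = 1"
  by (simp add: is_kernel_def is_dist_def)

lemma statdist_nonneg:
  assumes "is_kernel P" "ergodic P" "is_policy p"
  shows "0 \<le> statdist P p s"
  using stationary_statdist[OF assms] by (simp add: stationary_def is_dist_def)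

lemma occ_nonneg:
  assumes "is_kernel P" "ergodic P" "is_policy p"
  shows "0 \<le> occ P p s a"
  using statdist_nonneg[OF assms] assms(3) by (simp add: occ_def is_policy_def is_dist_def)

lemma sum_occ:
  assumes "is_kernel P" "ergodic P" "is_policy p"
  shows "(\<Sum>s\<in>UNIV. \<Sum>a\<in>UNIV. occ P p s a) = 1"
  using stationary_statdist[OF assms] sum_policy[OF assms(3)]
  by (simp add: occ_def stationary_def is_dist_def flip: sum_distrib_left)

lemma sum_sum_delta_mult [simp]:
  fixes f :: "'s::finite \<Rightarrow> 'a::finite \<Rightarrow> real"
  shows "(\<Sum>u\<in>UNIV. \<Sum>b\<in>UNIV. (if u = s \<and> b = a then 1 else 0) * f u b) = f s a"
proof -
  have "(\<Sum>b\<in>UNIV. (if u = s \<and> b = a then 1 else 0) * f u b) = (if s = u then f u a else 0)" for u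
    by (cases "u = s") (simp_all flip: of_bool_def)
  then show ?thesis
    by simp
qed

lemma sadist_Suc_evolve: "sadist P p s a (Suc t) s' a' = evolve (Ppi P p) (P s a) t s' * p s' a'"
proof (induction t arbitrary: s' a')
  case 0
  show ?case
    by simp
next
  case (Suc t)
  have "sadist P p s a (Suc (Suc t)) s' a' =
      (\<Sum>u\<in>UNIV. \<Sum>b\<in>UNIV. evolve (Ppi P p) (P s a) t u * (p u b * P u b s')) * p s' a'"
    by (subst sadist.simps(2)) (simp only: Suc mult.assoc)
  also have "\<dots> = evolve (Ppi P p) (P s a) (Suc t) s' * p s' a'"
    by (simp add: Ppi_def evolve_Suc sum_distrib_left)
  finally show ?case .
qed

definition policy_reward :: "('s \<Rightarrow> 'a::finite \<Rightarrow> real) \<Rightarrow> ('s \<Rightarrow> 'a \<Rightarrow> real) \<Rightarrow> 's \<Rightarrow> real" where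
  "policy_reward p g s = (\<Sum>a\<in>UNIV. p s a * g s a)"

definition expected_reward :: "('s::finite \<Rightarrow> 'a::finite \<Rightarrow> 's \<Rightarrow> real) \<Rightarrow> ('s \<Rightarrow> 'a \<Rightarrow> real)
    \<Rightarrow> ('s \<Rightarrow> 'a \<Rightarrow> real) \<Rightarrow> nat \<Rightarrow> 's \<Rightarrow> real" where
  "expected_reward P p g t u = (\<Sum>v\<in>UNIV. mstep (Ppi P p) t u v * policy_reward p g v)"

definition Qf_term :: "('s::finite \<Rightarrow> 'a::finite \<Rightarrow> 's \<Rightarrow> real) \<Rightarrow> ('s \<Rightarrow> 'a \<Rightarrow> real)
    \<Rightarrow> ('s \<Rightarrow> 'a \<Rightarrow> real) \<Rightarrow> nat \<Rightarrow> 's \<Rightarrow> 'a \<Rightarrow> real" where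
  "Qf_term P p g t s a = (\<Sum>s'\<in>UNIV. \<Sum>a'\<in>UNIV. sadist P p s a t s' a' * g s' a') - Jv P p g"

lemma Qf_eq_suminf: "Qf P p g s a = (\<Sum>t. Qf_term P p g t s a)"
  by (simp add: Qf_def Qf_term_def)

lemma Qf_term_0: "Qf_term P p g 0 s a = g s a - Jv P p g"
  by (simp add: Qf_term_def)

lemma Qf_term_Suc:
  assumes "is_kernel P"
  shows "Qf_term P p g (Suc t) s a = (\<Sum>u\<in>UNIV. P s a u * (expected_reward P p g t u - Jv P p g))"
proof -
  have "(\<Sum>s'\<in>UNIV. \<Sum>a'\<in>UNIV. sadist P p s a (Suc t) s' a' * g s' a')
      = (\<Sum>s'\<in>UNIV. evolve (Ppi P p) (P s a) t s' * policy_reward p g s')"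
    by (simp del: sadist.simps add: sadist_Suc_evolve policy_reward_def sum_distrib_left mult.assoc)
  also have "\<dots> = (\<Sum>s'\<in>UNIV. \<Sum>u\<in>UNIV. P s a u * (mstep (Ppi P p) t u s' * policy_reward p g s'))"
    by (simp add: evolve_def sum_distrib_right mult.assoc)
  also have "\<dots> = (\<Sum>u\<in>UNIV. P s a u * expected_reward P p g t u)"
    unfolding expected_reward_def by (rule sum_mult_sum_swap)
  finally show ?thesis
    unfolding Qf_term_def using sum_kernel[OF assms] by (simp add: sum_mult_diff_const)
qed

lemma expected_reward_0: "expected_reward P p g 0 u = policy_reward p g u"
  by (simp add: expected_reward_def flip: of_bool_def)

lemma expected_reward_Suc:
  "expected_reward P p g (Suc t) u = (\<Sum>w\<in>UNIV. Ppi P p u w * expected_reward P p g t w)"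
  unfolding expected_reward_def mstep_Suc_left
  by (simp add: sum_distrib_right mult.assoc sum_mult_sum_swap del: mstep.simps)

lemma Jv_eq_policy_reward: "Jv P p g = (\<Sum>s\<in>UNIV. statdist P p s * policy_reward p g s)"
  by (simp add: Jv_def occ_def policy_reward_def sum_distrib_left mult.assoc)

lemma policy_average_Qf_term:
  assumes P: "is_kernel P" and p: "is_policy p"
  shows "(\<Sum>a\<in>UNIV. p s a * Qf_term P p g t s a) = expected_reward P p g t s - Jv P p g"
proof (cases t)
  case 0
  show ?thesis
    unfolding 0 Qf_term_0 expected_reward_0 policy_reward_def
    by (rule sum_mult_diff_const[OF sum_policy[OF p]])
next
  case (Suc t')
  have "(\<Sum>a\<in>UNIV. p s a * Qf_term P p g t s a)
      = (\<Sum>w\<in>UNIV. \<Sum>a\<in>UNIV. p s a * P s a w * (expected_reward P p g t' w - Jv P p g))"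
    unfolding Suc Qf_term_Suc[OF P]
    by (subst sum.swap) (simp add: sum_distrib_left mult.assoc)
  also have "\<dots> = (\<Sum>w\<in>UNIV. Ppi P p s w * (expected_reward P p g t' w - Jv P p g))"
    by (simp add: Ppi_def sum_distrib_right)
  also have "\<dots> = expected_reward P p g t s - Jv P p g"
    using stochastic_Ppi[OF P p] unfolding Suc expected_reward_Suc
    by (simp add: sum_mult_diff_const stochastic_def is_dist_def)
  finally show ?thesis .
qed

text \<open>Mixing makes \<open>E[g(s\<^sub>t, a\<^sub>t)]\<close> converge to the average \<open>J\<close> summably fast, uniformly in the
  start state, because it is the pairing of \<open>policy_reward\<close> with the zero-sum vector
  \<open>(\<delta>\<^sub>u - d) Q\<^sup>t\<close>.\<close>
lemma expected_reward_deviation_summable: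
  assumes P: "is_kernel P" and E: "ergodic P" and p: "is_policy p"
  shows "\<exists>\<gamma>. summable \<gamma> \<and> (\<forall>t u. \<bar>expected_reward P p g t u - Jv P p g\<bar> \<le> \<gamma> t)"
proof -
  obtain \<gamma> where mix: "l1_mixing_rate (Ppi P p) \<gamma>"
    using ergodic_mixing[OF P E p] by blast
  let ?d = "statdist P p"
  have st: "stationary (Ppi P p) ?d"
    by (rule stationary_statdist[OF P E p])
  define B where "B = (\<Sum>v\<in>UNIV. \<bar>policy_reward p g v\<bar>)"
  have "\<bar>expected_reward P p g t u - Jv P p g\<bar> \<le> \<gamma> t * 2 * B" for t u
  proof -
    define x where "x = (\<lambda>w. (if u = w then 1 else 0) - ?d w)"
    have "(\<Sum>w\<in>UNIV. x w) = 0"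
      using st by (simp add: x_def sum_subtractf stationary_def is_dist_def)
    then have "(\<Sum>v\<in>UNIV. \<bar>evolve (Ppi P p) x t v\<bar>) \<le> \<gamma> t * (\<Sum>w\<in>UNIV. \<bar>x w\<bar>)"
      using mix unfolding l1_mixing_rate_def by blast
    also have "\<dots> \<le> \<gamma> t * 2"
    proof (rule mult_left_mono)
      have "(\<Sum>w\<in>UNIV. \<bar>x w\<bar>) \<le> (\<Sum>w\<in>UNIV. (if u = w then 1 else 0) + ?d w)"
      proof (intro sum_mono)
        fix w
        have "0 \<le> ?d w"
          using st by (simp add: stationary_def is_dist_def)
        then show "\<bar>x w\<bar> \<le> (if u = w then 1 else 0) + ?d w"
          by (simp add: x_def abs_le_iff)
      qed
      then show "(\<Sum>w\<in>UNIV. \<bar>x w\<bar>) \<le> 2"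
        using st by (simp add: sum.distrib stationary_def is_dist_def)
    qed (use mix in \<open>simp add: l1_mixing_rate_def\<close>)
    finally have l1: "(\<Sum>v\<in>UNIV. \<bar>evolve (Ppi P p) x t v\<bar>) \<le> \<gamma> t * 2" .
    have "evolve (Ppi P p) x t v = mstep (Ppi P p) t u v - ?d v" for v
      unfolding x_def evolve_diff evolve_stationary[OF st] by (simp add: evolve_def flip: of_bool_def)
    then have "expected_reward P p g t u - Jv P p g = (\<Sum>v\<in>UNIV. evolve (Ppi P p) x t v * policy_reward p g v)"
      by (simp add: expected_reward_def Jv_eq_policy_reward left_diff_distrib sum_subtractf)
    also have "\<bar>\<dots>\<bar> \<le> (\<Sum>v\<in>UNIV. \<bar>evolve (Ppi P p) x t v\<bar>) * B"
      unfolding B_def by (rule abs_sum_mult_le)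
    finally show ?thesis
      using l1 by (smt (verit, best) B_def mult_right_mono sum_nonneg abs_ge_zero)
  qed
  moreover have "summable (\<lambda>t. \<gamma> t * 2 * B)"
    using mix by (simp add: l1_mixing_rate_def summable_mult2)
  ultimately show ?thesis
    by blast
qed

lemma summable_Qf_term:
  fixes P :: "'s::finite \<Rightarrow> 'a::finite \<Rightarrow> 's \<Rightarrow> real"
  assumes P: "is_kernel P" and E: "ergodic P" and p: "is_policy p"
  shows "summable (\<lambda>t. Qf_term P p g t s a)"
proof -
  obtain \<gamma> where \<gamma>: "summable \<gamma>" "\<forall>t u. \<bar>expected_reward P p g t u - Jv P p g\<bar> \<le> \<gamma> t"
    using expected_reward_deviation_summable[OF P E p] by blast
  have "norm (Qf_term P p g (Suc t) s a) \<le> real CARD('s) * \<gamma> t" for t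
  proof -
    have "norm (Qf_term P p g (Suc t) s a)
        \<le> (\<Sum>u\<in>UNIV. \<bar>P s a u\<bar>) * (\<Sum>u\<in>UNIV. \<bar>expected_reward P p g t u - Jv P p g\<bar>)"
      unfolding Qf_term_Suc[OF P] real_norm_def by (rule abs_sum_mult_le)
    also have "\<dots> = (\<Sum>u\<in>UNIV. \<bar>expected_reward P p g t u - Jv P p g\<bar>)"
      using P by (simp add: is_kernel_def is_dist_def)
    also have "\<dots> \<le> (\<Sum>u\<in>(UNIV::'s set). \<gamma> t)"
      using \<gamma>(2) by (intro sum_mono) auto
    finally show ?thesis
      by simp
  qed
  then have "summable (\<lambda>t. Qf_term P p g (Suc t) s a)"
    by (intro summable_comparison_test'[where N = 0, OF summable_mult[OF \<gamma>(1)]])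
  then show ?thesis
    by (rule summable_Suc_iff[THEN iffD1])
qed

lemma Qf_Bellman:
  assumes P: "is_kernel P" and E: "ergodic P" and p: "is_policy p"
  shows "Qf P p g s a = g s a - Jv P p g + (\<Sum>u\<in>UNIV. P s a u * Vf P p g u)"
proof -
  have sum: "summable (\<lambda>t. Qf_term P p g t s a)" for s a
    by (rule summable_Qf_term[OF P E p])
  have "(\<Sum>t. Qf_term P p g (Suc t) s a)
      = (\<Sum>t. \<Sum>u\<in>UNIV. \<Sum>a'\<in>UNIV. P s a u * p u a' * Qf_term P p g t u a')"
    by (simp add: Qf_term_Suc[OF P] policy_average_Qf_term[OF P p, symmetric]
        sum_distrib_left mult.assoc)
  also have "\<dots> = (\<Sum>u\<in>UNIV. \<Sum>t. \<Sum>a'\<in>UNIV. P s a u * p u a' * Qf_term P p g t u a')"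
    using sum by (intro suminf_sum summable_sum summable_mult)
  also have "\<dots> = (\<Sum>u\<in>UNIV. \<Sum>a'\<in>UNIV. \<Sum>t. P s a u * p u a' * Qf_term P p g t u a')"
    using sum by (intro sum.cong refl suminf_sum summable_mult)
  also have "\<dots> = (\<Sum>u\<in>UNIV. P s a u * Vf P p g u)"
    using sum by (simp add: suminf_mult Vf_def Qf_eq_suminf sum_distrib_left mult.assoc)
  finally show ?thesis
    unfolding Qf_eq_suminf suminf_split_head[OF sum] by (simp add: Qf_term_0)
qed

lemma performance_difference:
  assumes P: "is_kernel P" and E: "ergodic P" and p: "is_policy p" and q: "is_policy q"
  shows "(\<Sum>s\<in>UNIV. \<Sum>a\<in>UNIV. occ P q s a * Adv P p g s a) = Jv P q g - Jv P p g"
proof -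
  let ?d = "statdist P q" and ?V = "Vf P p g"
  \<comment> \<open>stationarity of \<open>d\<^sup>q\<close> turns the expected next-state value into the current-state value\<close>
  have "(\<Sum>s\<in>UNIV. \<Sum>a\<in>UNIV. occ P q s a * (\<Sum>u\<in>UNIV. P s a u * ?V u))
      = (\<Sum>s\<in>UNIV. \<Sum>u\<in>UNIV. \<Sum>a\<in>UNIV. ?d s * (q s a * P s a u) * ?V u)"
    by (subst sum.swap) (simp add: occ_def sum_distrib_left mult.assoc)
  also have "\<dots> = (\<Sum>u\<in>UNIV. (\<Sum>s\<in>UNIV. ?d s * Ppi P q s u) * ?V u)"
    by (subst sum.swap) (simp add: Ppi_def sum_distrib_left sum_distrib_right)
  also have "\<dots> = (\<Sum>u\<in>UNIV. ?d u * ?V u)"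
    using stationary_statdist[OF P E q] by (simp add: stationary_def)
  also have "\<dots> = (\<Sum>s\<in>UNIV. \<Sum>a\<in>UNIV. occ P q s a * ?V s)"
    using sum_policy[OF q]
    by (simp add: occ_def mult.commute mult.left_commute flip: sum_distrib_right)
  finally have next_value: "(\<Sum>s\<in>UNIV. \<Sum>a\<in>UNIV. occ P q s a * (\<Sum>u\<in>UNIV. P s a u * ?V u))
      = (\<Sum>s\<in>UNIV. \<Sum>a\<in>UNIV. occ P q s a * ?V s)" .
  have "(\<Sum>s\<in>UNIV. \<Sum>a\<in>UNIV. occ P q s a * Adv P p g s a)
      = Jv P q g - (\<Sum>s\<in>UNIV. \<Sum>a\<in>UNIV. occ P q s a) * Jv P p g
        + (\<Sum>s\<in>UNIV. \<Sum>a\<in>UNIV. occ P q s a * (\<Sum>u\<in>UNIV. P s a u * ?V u))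
        - (\<Sum>s\<in>UNIV. \<Sum>a\<in>UNIV. occ P q s a * ?V s)"
    by (simp add: Adv_def Qf_Bellman[OF P E p] Jv_def algebra_simps sum.distrib sum_subtractf
        sum_distrib_right)
  then show ?thesis
    unfolding next_value sum_occ[OF P E q] by simp
qed

section \<open>Score functions and the Lagrangian gap\<close>

definition mean_score :: "('s::finite \<Rightarrow> 'a::finite \<Rightarrow> 's \<Rightarrow> real) \<Rightarrow> (real^'d \<Rightarrow> 's \<Rightarrow> 'a \<Rightarrow> real)
    \<Rightarrow> ('s \<Rightarrow> 'a \<Rightarrow> real) \<Rightarrow> real^'d \<Rightarrow> real^'d" where
  "mean_score P pol q \<theta> = (\<Sum>s\<in>UNIV. \<Sum>a\<in>UNIV. occ P q s a *\<^sub>R score pol \<theta> s a)"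

lemma inner_mean_score:
  "mean_score P pol q \<theta> \<bullet> v = (\<Sum>s\<in>UNIV. \<Sum>a\<in>UNIV. occ P q s a * (score pol \<theta> s a \<bullet> v))"
  by (simp add: mean_score_def inner_sum_left)

lemma norm_mean_score_le:
  assumes P: "is_kernel P" "ergodic P" and q: "is_policy q"
    and bound: "\<forall>\<theta> s a. norm (score pol \<theta> s a) \<le> G"
  shows "norm (mean_score P pol q \<theta>) \<le> G"
proof -
  have "norm (mean_score P pol q \<theta>) \<le> (\<Sum>s\<in>UNIV. \<Sum>a\<in>UNIV. occ P q s a * norm (score pol \<theta> s a))"
    unfolding mean_score_def using occ_nonneg[OF P q]
    by (intro order_trans[OF norm_sum] sum_mono order_trans[OF norm_sum]) simp
  also have "\<dots> \<le> (\<Sum>s\<in>UNIV. \<Sum>a\<in>UNIV. occ P q s a * G)"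
    using occ_nonneg[OF P q] bound by (intro sum_mono mult_left_mono) auto
  also have "\<dots> = G"
    using sum_occ[OF P q] by (simp flip: sum_distrib_right)
  finally show ?thesis .
qed

lemma linear_eq_inner_axis:
  fixes D :: "real^'n \<Rightarrow> real"
  assumes "linear D"
  shows "D h = (\<chi> i. D (axis i 1)) \<bullet> h"
proof -
  have "D h = D (\<Sum>i\<in>UNIV. h $ i *\<^sub>R axis i 1)"
    using basis_expansion[of h] by (simp add: scalar_mult_eq_scaleR)
  also have "\<dots> = (\<chi> i. D (axis i 1)) \<bullet> h"
    by (simp add: linear_sum[OF assms] linear_cmul[OF assms] inner_vec_def mult.commute)
  finally show ?thesis .
qed

lemma has_derivative_ln_policy:
  fixes pol :: "real^'d \<Rightarrow> 's \<Rightarrow> 'a \<Rightarrow> real"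
  assumes pos: "\<forall>\<theta> s a. 0 < pol \<theta> s a"
    and diff: "\<forall>\<theta> s a. (\<lambda>t. pol t s a) differentiable (at \<theta>)"
  shows "((\<lambda>t. ln (pol t s a)) has_derivative (\<lambda>h. score pol \<theta> s a \<bullet> h)) (at \<theta>)"
proof -
  let ?f = "\<lambda>t. ln (pol t s a)"
  obtain D where "((\<lambda>t. pol t s a) has_derivative D) (at \<theta>)"
    using diff unfolding differentiable_def by blast
  then have "(?f has_derivative (\<lambda>h. D h * inverse (pol \<theta> s a))) (at \<theta>)"
    using pos by (auto intro!: derivative_eq_intros)
  then have "?f differentiable (at \<theta>)"
    unfolding differentiable_def by blast
  then have fD: "(?f has_derivative frechet_derivative ?f (at \<theta>)) (at \<theta>)"
    by (simp add: frechet_derivative_works)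
  have "frechet_derivative ?f (at \<theta>) = (\<lambda>h. score pol \<theta> s a \<bullet> h)"
    by (rule ext, subst linear_eq_inner_axis[OF has_derivative_linear[OF fD]]) (simp add: score_def grad_def)
  then show ?thesis
    using fD by simp
qed

lemma ln_policy_quadratic_lower_bound:
  fixes pol :: "real^'d \<Rightarrow> 's \<Rightarrow> 'a \<Rightarrow> real"
  assumes pos: "\<forall>\<theta> s a. 0 < pol \<theta> s a"
    and diff: "\<forall>\<theta> s a. (\<lambda>t. pol t s a) differentiable (at \<theta>)"
    and lip: "\<forall>\<theta>1 \<theta>2 s a. norm (score pol \<theta>1 s a - score pol \<theta>2 s a) \<le> G * norm (\<theta>1 - \<theta>2)"
  shows "ln (pol \<theta> s a) + score pol \<theta> s a \<bullet> v - G / 2 * (norm v)\<^sup>2 \<le> ln (pol (\<theta> + v) s a)"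
proof -
  define g where "g = (\<lambda>t::real. ln (pol (\<theta> + t *\<^sub>R v) s a))"
  define c where "c = score pol \<theta> s a \<bullet> v"
  \<comment> \<open>the error of the first-order expansion plus the quadratic penalty is nondecreasing along the segment\<close>
  define h where "h t = g t - g 0 - t * c + (G / 2 * (norm v)\<^sup>2) * (t * t)" for t :: real
  have "(g has_real_derivative (score pol (\<theta> + t *\<^sub>R v) s a \<bullet> v)) (at t)" for t
  proof -
    have "((\<lambda>t::real. \<theta> + t *\<^sub>R v) has_derivative (\<lambda>h. h *\<^sub>R v)) (at t)"
      by (auto intro!: derivative_eq_intros)
    from has_derivative_compose[OF this has_derivative_ln_policy[OF pos diff]]
    have "(g has_derivative (\<lambda>h. score pol (\<theta> + t *\<^sub>R v) s a \<bullet> (h *\<^sub>R v))) (at t)"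
      by (simp add: g_def)
    moreover have "(\<lambda>h. score pol (\<theta> + t *\<^sub>R v) s a \<bullet> (h *\<^sub>R v)) = (*) (score pol (\<theta> + t *\<^sub>R v) s a \<bullet> v)"
      by (simp add: fun_eq_iff mult.commute)
    ultimately show ?thesis
      by (simp add: has_field_derivative_def)
  qed
  then have h': "(h has_real_derivative (score pol (\<theta> + t *\<^sub>R v) s a \<bullet> v - c + G * t * (norm v)\<^sup>2)) (at t)" for t
    unfolding h_def by (auto intro!: derivative_eq_intros simp: algebra_simps)
  have "h 0 \<le> h 1"
  proof (rule DERIV_nonneg_imp_nondecreasing[of 0 1 h])
    fix t :: real
    assume t: "0 \<le> t" "t \<le> 1"
    have "\<bar>score pol (\<theta> + t *\<^sub>R v) s a \<bullet> v - c\<bar>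
        \<le> norm (score pol (\<theta> + t *\<^sub>R v) s a - score pol \<theta> s a) * norm v"
      unfolding c_def inner_diff_left[symmetric] by (rule Cauchy_Schwarz_ineq2)
    also have "\<dots> \<le> G * norm (t *\<^sub>R v) * norm v"
      using lip[rule_format, of "\<theta> + t *\<^sub>R v" s a \<theta>] by (intro mult_right_mono) auto
    also have "\<dots> = G * t * (norm v)\<^sup>2"
      using t by (simp add: power2_eq_square)
    finally have "0 \<le> score pol (\<theta> + t *\<^sub>R v) s a \<bullet> v - c + G * t * (norm v)\<^sup>2"
      by linarith
    then show "\<exists>y. (h has_real_derivative y) (at t) \<and> 0 \<le> y"
      using h' by blast
  qed simp
  then show ?thesis
    by (simp add: h_def g_def c_def power2_eq_square)
qed

lemma continuous_on_score:
  assumes lip: "\<forall>\<theta>1 \<theta>2 s a. norm (score pol \<theta>1 s a - score pol \<theta>2 s a) \<le> G * norm (\<theta>1 - \<theta>2)"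
  shows "continuous_on UNIV (\<lambda>\<theta>. score pol \<theta> s a)"
proof (rule lipschitz_on_continuous_on)
  show "\<bar>G\<bar>-lipschitz_on UNIV (\<lambda>\<theta>. score pol \<theta> s a)"
  proof (rule lipschitz_onI)
    fix x y
    have "dist (score pol x s a) (score pol y s a) \<le> G * dist x y"
      using lip by (simp add: dist_norm)
    also have "\<dots> \<le> \<bar>G\<bar> * dist x y"
      by (simp add: mult_right_mono)
    finally show "dist (score pol x s a) (score pol y s a) \<le> \<bar>G\<bar> * dist x y" .
  qed simp
qed

lemma KL_nonneg:
  fixes p q :: "'a::finite \<Rightarrow> real"
  assumes p: "is_dist p" and q: "is_dist q" and q_pos: "\<forall>a. 0 < q a"
  shows "0 \<le> KL p q"
proof -
  \<comment> \<open>termwise \<open>p ln (p/q) \<ge> p - q\<close>, from \<open>ln x \<le> x - 1\<close> at \<open>x = q/p\<close>\<close>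
  have "p a - q a \<le> (if p a = 0 then 0 else p a * ln (p a / q a))" for a
  proof (cases "p a = 0")
    case False
    then have pa: "0 < p a"
      using p by (simp add: is_dist_def order_less_le)
    have "ln (q a / p a) \<le> q a / p a - 1"
      using pa q_pos by (intro ln_le_minus_one) simp
    moreover have "ln (p a / q a) = - ln (q a / p a)"
      using pa q_pos by (simp add: ln_div)
    ultimately have "p a * (1 - q a / p a) \<le> p a * ln (p a / q a)"
      using pa by (intro mult_left_mono) auto
    moreover have "p a * (1 - q a / p a) = p a - q a"
      using pa by (simp add: field_simps)
    ultimately show ?thesis
      using False by simp
  qed (use q_pos in \<open>simp add: less_imp_le\<close>)
  then have "(\<Sum>a\<in>UNIV. p a - q a) \<le> KL p q"
    unfolding KL_def by (rule sum_mono)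
  then show ?thesis
    using p q by (simp add: sum_subtractf is_dist_def)
qed

lemma KL_diff:
  fixes p q1 q2 :: "'a::finite \<Rightarrow> real"
  assumes "\<forall>a. 0 \<le> p a" "\<forall>a. 0 < q1 a" "\<forall>a. 0 < q2 a"
  shows "KL p q1 - KL p q2 = (\<Sum>a\<in>UNIV. p a * (ln (q2 a) - ln (q1 a)))"
proof -
  have "(if p a = 0 then 0 else p a * ln (p a / q1 a)) - (if p a = 0 then 0 else p a * ln (p a / q2 a))
      = p a * (ln (q2 a) - ln (q1 a))" for a
    using assms[rule_format, of a] by (auto simp: ln_div order_less_le algebra_simps)
  then show ?thesis
    unfolding KL_def by (simp flip: sum_subtractf)
qed

lemma KL_term_step:
  fixes P :: "'s::finite \<Rightarrow> 'a::finite \<Rightarrow> 's \<Rightarrow> real" and pol :: "real^'d \<Rightarrow> 's \<Rightarrow> 'a \<Rightarrow> real"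
  assumes P: "is_kernel P" "ergodic P" and q: "is_policy q"
    and pos: "\<forall>\<theta> s a. 0 < pol \<theta> s a"
    and diff: "\<forall>\<theta> s a. (\<lambda>t. pol t s a) differentiable (at \<theta>)"
    and lip: "\<forall>\<theta>1 \<theta>2 s a. norm (score pol \<theta>1 s a - score pol \<theta>2 s a) \<le> G * norm (\<theta>1 - \<theta>2)"
  shows "mean_score P pol q \<theta> \<bullet> v - G / 2 * (norm v)\<^sup>2 \<le> KL_term P q (pol \<theta>) - KL_term P q (pol (\<theta> + v))"
proof -
  have "(\<Sum>s\<in>UNIV. \<Sum>a\<in>UNIV. occ P q s a * (score pol \<theta> s a \<bullet> v - G / 2 * (norm v)\<^sup>2))
      = mean_score P pol q \<theta> \<bullet> v - (\<Sum>s\<in>UNIV. \<Sum>a\<in>UNIV. occ P q s a) * (G / 2 * (norm v)\<^sup>2)"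
    by (simp add: inner_mean_score right_diff_distrib sum_subtractf sum_distrib_right)
  then have "mean_score P pol q \<theta> \<bullet> v - G / 2 * (norm v)\<^sup>2
      = (\<Sum>s\<in>UNIV. \<Sum>a\<in>UNIV. occ P q s a * (score pol \<theta> s a \<bullet> v - G / 2 * (norm v)\<^sup>2))"
    using sum_occ[OF P q] by simp
  also have "\<dots> \<le> (\<Sum>s\<in>UNIV. \<Sum>a\<in>UNIV. occ P q s a * (ln (pol (\<theta> + v) s a) - ln (pol \<theta> s a)))"
    using occ_nonneg[OF P q] ln_policy_quadratic_lower_bound[OF pos diff lip, of \<theta> _ _ v]
    by (intro sum_mono mult_left_mono) (auto simp: algebra_simps)
  also have "\<dots> = KL_term P q (pol \<theta>) - KL_term P q (pol (\<theta> + v))"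
    using q pos
    by (simp add: KL_term_def KL_diff occ_def is_policy_def is_dist_def sum_distrib_left mult.assoc
        flip: sum_subtractf right_diff_distrib)
  finally show ?thesis .
qed

lemma square_weighted_mean_le:
  fixes w y :: "'i \<Rightarrow> real"
  assumes "finite A" and w: "\<forall>i\<in>A. 0 \<le> w i" and w1: "(\<Sum>i\<in>A. w i) = 1"
  shows "(\<Sum>i\<in>A. w i * y i)\<^sup>2 \<le> (\<Sum>i\<in>A. w i * (y i)\<^sup>2)"
proof -
  define m where "m = (\<Sum>i\<in>A. w i * y i)"
  have "0 \<le> (\<Sum>i\<in>A. w i * (y i - m)\<^sup>2)"
    using w by (intro sum_nonneg) auto
  also have "\<dots> = (\<Sum>i\<in>A. w i * (y i)\<^sup>2) - 2 * m * (\<Sum>i\<in>A. w i * y i) + m\<^sup>2 * (\<Sum>i\<in>A. w i)"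
    by (simp add: power2_eq_square algebra_simps sum.distrib sum_subtractf sum_distrib_left)
  also have "\<dots> = (\<Sum>i\<in>A. w i * (y i)\<^sup>2) - m\<^sup>2"
    using w1 by (simp add: m_def power2_eq_square)
  finally show ?thesis
    by (simp add: m_def)
qed

text \<open>By the performance difference lemma the Lagrangian gap is the \<open>\<nu>\<^sup>q\<close>-mean of the combined advantage,
  which the compatible approximation error \<open>eps\<close> lets us replace by the linear model
  \<open>\<langle>score, natgrad\<rangle>\<close> (Jensen's inequality turns the squared error into \<open>sqrt eps\<close>).\<close>
lemma Lagr_gap_le_natgrad:
  fixes P :: "'s::finite \<Rightarrow> 'a::finite \<Rightarrow> 's \<Rightarrow> real" and pol :: "real^'d \<Rightarrow> 's \<Rightarrow> 'a \<Rightarrow> real"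
  assumes P: "is_kernel P" "ergodic P" and p: "is_policy (pol \<theta>)" and q: "is_policy q"
    and compat: "(\<Sum>s\<in>UNIV. \<Sum>a\<in>UNIV. occ P q s a *
          (score pol \<theta> s a \<bullet> natgrad P r c pol \<theta> l
             - Adv P (pol \<theta>) r s a - l * Adv P (pol \<theta>) c s a)\<^sup>2) \<le> eps"
  shows "Lagr P r c q l - Lagr P r c (pol \<theta>) l - sqrt eps \<le> mean_score P pol q \<theta> \<bullet> natgrad P r c pol \<theta> l"
proof -
  define y where "y s a = score pol \<theta> s a \<bullet> natgrad P r c pol \<theta> l
      - Adv P (pol \<theta>) r s a - l * Adv P (pol \<theta>) c s a" for s a
  have sum_pairs: "(\<Sum>s\<in>UNIV. \<Sum>a\<in>UNIV. f s a) = (\<Sum>x\<in>UNIV. f (fst x) (snd x))" for f :: "'s \<Rightarrow> 'a \<Rightarrow> real"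
    by (simp add: sum.cartesian_product split_def flip: UNIV_Times_UNIV)
  have "(\<Sum>x\<in>UNIV. occ P q (fst x) (snd x) * y (fst x) (snd x))\<^sup>2
      \<le> (\<Sum>x\<in>UNIV. occ P q (fst x) (snd x) * (y (fst x) (snd x))\<^sup>2)"
    using occ_nonneg[OF P q] sum_occ[OF P q]
    by (intro square_weighted_mean_le) (auto simp: sum_pairs)
  then have "(\<Sum>s\<in>UNIV. \<Sum>a\<in>UNIV. occ P q s a * y s a)\<^sup>2 \<le> eps"
    using compat unfolding sum_pairs y_def by linarith
  then have "\<bar>\<Sum>s\<in>UNIV. \<Sum>a\<in>UNIV. occ P q s a * y s a\<bar> \<le> sqrt eps"
    using real_sqrt_le_mono by fastforce
  moreover have "(\<Sum>s\<in>UNIV. \<Sum>a\<in>UNIV. occ P q s a * y s a)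
      = mean_score P pol q \<theta> \<bullet> natgrad P r c pol \<theta> l
        - (\<Sum>s\<in>UNIV. \<Sum>a\<in>UNIV. occ P q s a * Adv P (pol \<theta>) r s a)
        - l * (\<Sum>s\<in>UNIV. \<Sum>a\<in>UNIV. occ P q s a * Adv P (pol \<theta>) c s a)"
    by (simp add: y_def inner_mean_score algebra_simps sum_subtractf sum.distrib sum_distrib_left)
  moreover have "\<dots> = mean_score P pol q \<theta> \<bullet> natgrad P r c pol \<theta> l - (Lagr P r c q l - Lagr P r c (pol \<theta>) l)"
    by (simp add: performance_difference[OF P p q] Lagr_def algebra_simps)
  ultimately show ?thesis
    by linarith
qed

section \<open>Measurability and conditional expectations\<close>

lemma continuous_on_policy:
  assumes "\<forall>\<theta> s a. (\<lambda>t. pol t s a) differentiable (at \<theta>)"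
  shows "continuous_on UNIV (\<lambda>t. pol t s a)"
  using assms by (intro differentiable_imp_continuous_on) (simp add: differentiable_on_def differentiable_at_withinI)

lemma measurable_mstep_policy:
  fixes P :: "'s::finite \<Rightarrow> 'a::finite \<Rightarrow> 's \<Rightarrow> real" and pol :: "real^'d \<Rightarrow> 's \<Rightarrow> 'a \<Rightarrow> real"
  assumes diff: "\<forall>\<theta> s a. (\<lambda>t. pol t s a) differentiable (at \<theta>)" and \<Theta>: "\<Theta> \<in> borel_measurable M"
  shows "(\<lambda>x. mstep (Ppi P (pol (\<Theta> x))) n s s') \<in> borel_measurable M"
proof (induction n arbitrary: s')
  case (Suc n)
  have "(\<lambda>x. pol (\<Theta> x) u a) \<in> borel_measurable M" for u a
    by (rule borel_measurable_continuous_on[OF continuous_on_policy[OF diff] \<Theta>])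
  then show ?case
    using Suc by (simp add: Ppi_def del: mstep.simps(1))
qed simp

lemma measurable_Jv_policy:
  fixes P :: "'s::finite \<Rightarrow> 'a::finite \<Rightarrow> 's \<Rightarrow> real" and pol :: "real^'d \<Rightarrow> 's \<Rightarrow> 'a \<Rightarrow> real"
  assumes P: "is_kernel P" "ergodic P" and p: "\<forall>\<theta>. is_policy (pol \<theta>)"
    and diff: "\<forall>\<theta> s a. (\<lambda>t. pol t s a) differentiable (at \<theta>)" and \<Theta>: "\<Theta> \<in> borel_measurable M"
  shows "(\<lambda>x. Jv P (pol (\<Theta> x)) g) \<in> borel_measurable M"
proof -
  fix s0 :: 's
  have "(\<lambda>x. statdist P (pol (\<Theta> x)) s) \<in> borel_measurable M" for s
    using mstep_tendsto_statdist[OF P p[rule_format]]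
    by (rule borel_measurable_LIMSEQ_real) (rule measurable_mstep_policy[OF diff \<Theta>])
  moreover have "(\<lambda>x. pol (\<Theta> x) s a) \<in> borel_measurable M" for s a
    by (rule borel_measurable_continuous_on[OF continuous_on_policy[OF diff] \<Theta>])
  ultimately show ?thesis
    by (simp add: Jv_def occ_def)
qed

lemma measurable_mean_score_component:
  assumes lip: "\<forall>\<theta>1 \<theta>2 s a. norm (score pol \<theta>1 s a - score pol \<theta>2 s a) \<le> G * norm (\<theta>1 - \<theta>2)"
    and \<Theta>: "\<Theta> \<in> borel_measurable M"
  shows "(\<lambda>x. mean_score P pol q (\<Theta> x) $ i) \<in> borel_measurable M"
proof -
  have "continuous_on UNIV (\<lambda>\<theta>. mean_score P pol q \<theta>)"
    unfolding mean_score_def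
    by (intro continuous_intros continuous_on_score[OF lip])
  then show ?thesis
    by (intro borel_measurable_continuous_on[OF _ \<Theta>] continuous_on_component)
qed

lemma integral_mult_cond_exp_residual:
  fixes f g :: "'w \<Rightarrow> real"
  assumes G: "sigma_finite_subalgebra M G" and f: "f \<in> borel_measurable G"
    and bounded: "\<forall>x. \<bar>f x\<bar> \<le> B" and g: "integrable M g"
  shows "integrable M (\<lambda>x. f x * (g x - real_cond_exp M G g x))"
    and "(\<integral>x. f x * (g x - real_cond_exp M G g x) \<partial>M) = 0"
proof -
  have fM: "f \<in> borel_measurable M"
    using G measurable_from_subalg[OF _ f] by (simp add: sigma_finite_subalgebra_def)
  have fg: "integrable M (\<lambda>x. f x * g x)"
  proof (rule Bochner_Integration.integrable_bound[where f = "\<lambda>x. B * g x"])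
    have "\<bar>f x\<bar> \<le> \<bar>B\<bar>" for x
      using bounded[rule_format, of x] by linarith
    then show "AE x in M. norm (f x * g x) \<le> norm (B * g x)"
      by (simp add: abs_mult mult_right_mono)
  qed (use g fM in auto)
  note ce = sigma_finite_subalgebra.real_cond_exp_intg[OF G fg f borel_measurable_integrable[OF g]]
  show "integrable M (\<lambda>x. f x * (g x - real_cond_exp M G g x))"
    using fg ce(1) by (simp add: right_diff_distrib)
  show "(\<integral>x. f x * (g x - real_cond_exp M G g x) \<partial>M) = 0"
    using fg ce by (simp add: right_diff_distrib)
qed

text \<open>No integrability of \<open>f\<close> is needed: otherwise its Bochner integral is \<open>0\<close>.\<close>
lemma integral_le_nn_integral_centred:
  fixes f Z R :: "'w \<Rightarrow> real"
  assumes Z: "integrable M Z" "(\<integral>x. Z x \<partial>M) = 0" and le: "\<forall>x\<in>space M. f x + Z x \<le> R x"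
  shows "ereal (\<integral>x. f x \<partial>M) \<le> enn2ereal (\<integral>\<^sup>+x. ennreal (R x) \<partial>M)"
proof (cases "integrable M f")
  case True
  then have fZ: "integrable M (\<lambda>x. max 0 (f x + Z x))"
    using Z by (intro integrable_max) auto
  have "(\<integral>x. f x \<partial>M) = (\<integral>x. f x + Z x \<partial>M)"
    using True Z by simp
  also have "\<dots> \<le> (\<integral>x. max 0 (f x + Z x) \<partial>M)"
    using True Z fZ by (intro integral_mono) auto
  finally have "ennreal (\<integral>x. f x \<partial>M) \<le> (\<integral>\<^sup>+x. ennreal (max 0 (f x + Z x)) \<partial>M)"
    using fZ by (subst nn_integral_eq_integral) (auto intro: ennreal_leI)
  also have "\<dots> \<le> (\<integral>\<^sup>+x. ennreal (R x) \<partial>M)"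
    using le by (intro nn_integral_mono) (auto intro: ennreal_leI)
  finally have le_nn: "ennreal (\<integral>x. f x \<partial>M) \<le> (\<integral>\<^sup>+x. ennreal (R x) \<partial>M)" .
  show ?thesis
  proof (cases "0 \<le> (\<integral>x. f x \<partial>M)")
    case True
    then show ?thesis
      using le_nn by (simp add: less_eq_ennreal.rep_eq)
  next
    case False
    then have "ereal (\<integral>x. f x \<partial>M) \<le> 0"
      by simp
    then show ?thesis
      using enn2ereal_nonneg order_trans by blast
  qed
qed (simp add: not_integrable_integral_eq enn2ereal_nonneg flip: zero_ereal_def)

lemma nn_integral_le_cmult_dominated:
  fixes f g :: "'w \<Rightarrow> real"
  assumes f: "f \<in> borel_measurable M" and le: "\<forall>x\<in>space M. f x \<le> c * g x" and c: "0 \<le> c"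
  shows "(\<integral>\<^sup>+x. ennreal (f x) \<partial>M) \<le> ennreal c * (\<integral>\<^sup>+x. ennreal (g x) \<partial>M)"
proof (cases "c = 0")
  case True
  then have "(\<integral>\<^sup>+x. ennreal (f x) \<partial>M) = (\<integral>\<^sup>+x. 0 \<partial>M)"
    using le by (intro nn_integral_cong) (simp add: ennreal_eq_0_iff)
  then show ?thesis
    by simp
next
  case False
  \<comment> \<open>\<open>g\<close> need not be measurable, so the constant is pulled out on the side of \<open>f\<close>\<close>
  have "(\<integral>\<^sup>+x. ennreal (f x) \<partial>M) = (\<integral>\<^sup>+x. ennreal c * ennreal (f x / c) \<partial>M)"
    using False c by (intro nn_integral_cong) (simp flip: ennreal_mult')
  also have "\<dots> = ennreal c * (\<integral>\<^sup>+x. ennreal (f x / c) \<partial>M)"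
    using f by (intro nn_integral_cmult) simp
  also have "\<dots> \<le> ennreal c * (\<integral>\<^sup>+x. ennreal (g x) \<partial>M)"
    using le False c by (intro mult_left_mono nn_integral_mono ennreal_leI) (auto simp: divide_le_eq mult.commute)
  finally show ?thesis .
qed

lemma KL_term_nonneg:
  assumes P: "is_kernel P" "ergodic P" and q: "is_policy q" and p: "is_policy p" and p_pos: "\<forall>s a. 0 < p s a"
  shows "0 \<le> KL_term P q p"
  unfolding KL_term_def using statdist_nonneg[OF P q] q p p_pos
  by (intro sum_nonneg mult_nonneg_nonneg KL_nonneg) (auto simp: is_policy_def)

section \<open>Natural policy gradient iterates\<close>

locale npg_iterates =
  fixes P :: "'s::finite \<Rightarrow> 'a::finite \<Rightarrow> 's \<Rightarrow> real"
    and r c :: "'s \<Rightarrow> 'a \<Rightarrow> real"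
    and pol :: "real^'d \<Rightarrow> 's \<Rightarrow> 'a \<Rightarrow> real"
    and pistar :: "'s \<Rightarrow> 'a \<Rightarrow> real"
    and \<delta> G1 G2 eps_bias \<alpha> :: real
    and K :: nat
    and M :: "'w measure" and F :: "nat \<Rightarrow> 'w measure"
    and theta omega :: "nat \<Rightarrow> 'w \<Rightarrow> real^'d"
    and lam :: "nat \<Rightarrow> 'w \<Rightarrow> real"
    and th0 :: "real^'d"
  assumes kernel: "is_kernel P"
    and erg: "ergodic P"
    and pi_policy: "\<forall>\<theta>. is_policy (pol \<theta>)"
    and pi_pos: "\<forall>\<theta> s a. 0 < pol \<theta> s a"
    and pi_diff: "\<forall>\<theta> s a. (\<lambda>t. pol t s a) differentiable (at \<theta>)"
    and delta_pos: "0 < \<delta>"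
    and pistar_policy: "is_policy pistar"
    and score_bound: "\<forall>\<theta> s a. norm (score pol \<theta> s a) \<le> G1"
    and score_lip: "\<forall>\<theta>1 \<theta>2 s a. norm (score pol \<theta>1 s a - score pol \<theta>2 s a) \<le> G2 * norm (\<theta>1 - \<theta>2)"
    and compat: "\<forall>\<theta> l. 0 \<le> l \<and> l \<le> 2 / \<delta> \<longrightarrow>
       (\<Sum>s\<in>UNIV. \<Sum>a\<in>UNIV. occ P pistar s a *
          (score pol \<theta> s a \<bullet> natgrad P r c pol \<theta> l
             - Adv P (pol \<theta>) r s a - l * Adv P (pol \<theta>) c s a)\<^sup>2) \<le> eps_bias"
    and prob: "prob_space M"
    and subalg: "\<forall>k. subalgebra M (F k)"
    and adapted: "\<forall>k\<le>K. theta k \<in> borel_measurable (F k) \<and> lam k \<in> borel_measurable (F k)"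
    and lam_range: "\<forall>k\<le>K. \<forall>x\<in>space M. 0 \<le> lam k x \<and> lam k x \<le> 2 / \<delta>"
    and theta0: "\<forall>x\<in>space M. theta 0 x = th0"
    and alpha_pos: "0 < \<alpha>"
    and update: "\<forall>k<K. \<forall>x\<in>space M. theta (Suc k) x = theta k x + \<alpha> *\<^sub>R omega k x"
    and omega_rv: "\<forall>k<K. omega k \<in> borel_measurable M \<and> (\<forall>i. integrable M (\<lambda>x. omega k x $ i))"
    and K_pos: "0 < K"
begin

definition cond_omega :: "nat \<Rightarrow> 'w \<Rightarrow> real^'d" where
  "cond_omega k x = (\<chi> i. real_cond_exp M (F k) (\<lambda>y. omega k y $ i) x)"

definition gap :: "nat \<Rightarrow> 'w \<Rightarrow> real" where
  "gap k x = Lagr P r c pistar (lam k x) - Lagr P r c (pol (theta k x)) (lam k x)"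

definition noise :: "nat \<Rightarrow> 'w \<Rightarrow> real" where
  "noise k x = mean_score P pol pistar (theta k x) \<bullet> (omega k x - cond_omega k x)"

text \<open>The part of the gap not explained by the conditional mean step.  It is dominated by
  \<open>G1 \<parallel>cond_omega - natgrad\<parallel>\<close> but, unlike that bound, it is measurable: nothing is known about the
  measurability of \<open>natgrad\<close>, which involves a choice of inverse matrix.\<close>
definition excess :: "nat \<Rightarrow> 'w \<Rightarrow> real" where
  "excess k x = max 0 (gap k x - sqrt eps_bias - mean_score P pol pistar (theta k x) \<bullet> cond_omega k x)"

definition pathwise_bound :: "'w \<Rightarrow> real" where
  "pathwise_bound x = sqrt eps_bias + KL_term P pistar (pol th0) / (\<alpha> * real K)
     + (\<Sum>k<K. excess k x / real K) + \<alpha> * G2 / (2 * real K) * (\<Sum>k<K. (norm (omega k x))\<^sup>2)"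

lemma excess_nonneg: "0 \<le> excess k x"
  by (simp add: excess_def)

lemma G1_nonneg: "0 \<le> G1"
  using score_bound by (meson norm_ge_zero order_trans)

lemma G2_nonneg: "0 \<le> G2"
proof -
  fix i s a
  have "norm (score pol (axis i 1) s a - score pol 0 s a) \<le> G2"
    using score_lip[rule_format, of "axis i 1" s a 0] by simp
  then show ?thesis
    by (meson norm_ge_zero order_trans)
qed

lemma eps_bias_nonneg: "0 \<le> eps_bias"
proof -
  have "0 \<le> (\<Sum>s\<in>UNIV. \<Sum>a\<in>UNIV. occ P pistar s a *
      (score pol th0 s a \<bullet> natgrad P r c pol th0 0 - Adv P (pol th0) r s a - 0 * Adv P (pol th0) c s a)\<^sup>2)"
    using occ_nonneg[OF kernel erg pistar_policy] by (intro sum_nonneg mult_nonneg_nonneg) auto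
  also have "\<dots> \<le> eps_bias"
    using compat[rule_format, where \<theta> = th0 and l = 0] delta_pos by simp
  finally show ?thesis .
qed

lemma sigma_finite_F: "sigma_finite_subalgebra M (F k)"
  using prob subalg
  by (intro finite_measure_subalgebra_is_sigma_finite)
    (simp add: finite_measure_subalgebra_def finite_measure_subalgebra_axioms_def prob_space_def)

lemma theta_measurable: "k \<le> K \<Longrightarrow> theta k \<in> borel_measurable M"
  using adapted subalg measurable_from_subalg by blast

lemma lam_measurable: "k \<le> K \<Longrightarrow> lam k \<in> borel_measurable M"
  using adapted subalg measurable_from_subalg by blast

lemma gap_measurable: "k \<le> K \<Longrightarrow> gap k \<in> borel_measurable M"
  unfolding gap_def[abs_def] Lagr_def
  using lam_measurable measurable_Jv_policy[OF kernel erg pi_policy pi_diff theta_measurable] by simp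

lemma excess_measurable: "k \<le> K \<Longrightarrow> excess k \<in> borel_measurable M"
  unfolding excess_def[abs_def] inner_vec_def cond_omega_def
  using gap_measurable measurable_mean_score_component[OF score_lip theta_measurable]
    borel_measurable_cond_exp2
  by simp

lemma excess_le:
  assumes x: "x \<in> space M" and k: "k < K"
  shows "excess k x \<le> G1 * norm (cond_omega k x - natgrad P r c pol (theta k x) (lam k x))"
proof -
  let ?m = "mean_score P pol pistar (theta k x)" and ?w = "natgrad P r c pol (theta k x) (lam k x)"
  have "gap k x - sqrt eps_bias \<le> ?m \<bullet> ?w"
    unfolding gap_def using compat lam_range x k
    by (intro Lagr_gap_le_natgrad[OF kernel erg pi_policy[rule_format] pistar_policy]) auto
  also have "\<dots> = ?m \<bullet> cond_omega k x + ?m \<bullet> (?w - cond_omega k x)"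
    by (simp add: inner_diff_right)
  also have "?m \<bullet> (?w - cond_omega k x) \<le> norm ?m * norm (?w - cond_omega k x)"
    by (rule norm_cauchy_schwarz)
  also have "\<dots> \<le> G1 * norm (cond_omega k x - ?w)"
    using norm_mean_score_le[OF kernel erg pistar_policy score_bound]
    by (simp add: norm_minus_commute mult_right_mono)
  finally show ?thesis
    using G1_nonneg by (simp add: excess_def)
qed

lemma step_bound:
  assumes x: "x \<in> space M" and k: "k < K"
  shows "gap k x + noise k x \<le> sqrt eps_bias + excess k x
    + (KL_term P pistar (pol (theta k x)) - KL_term P pistar (pol (theta (Suc k) x))) / \<alpha>
    + \<alpha> * G2 / 2 * (norm (omega k x))\<^sup>2"
proof -
  let ?m = "mean_score P pol pistar (theta k x)"
  have "?m \<bullet> (\<alpha> *\<^sub>R omega k x) - G2 / 2 * (norm (\<alpha> *\<^sub>R omega k x))\<^sup>2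
      \<le> KL_term P pistar (pol (theta k x)) - KL_term P pistar (pol (theta (Suc k) x))"
    using update x k KL_term_step[OF kernel erg pistar_policy pi_pos pi_diff score_lip,
        of "theta k x" "\<alpha> *\<^sub>R omega k x"] by simp
  moreover have "?m \<bullet> (\<alpha> *\<^sub>R omega k x) = \<alpha> * (?m \<bullet> cond_omega k x + noise k x)"
    by (simp add: noise_def inner_diff_right)
  moreover have "(norm (\<alpha> *\<^sub>R omega k x))\<^sup>2 = \<alpha> * (\<alpha> * (norm (omega k x))\<^sup>2)"
    by (simp add: power_mult_distrib power2_eq_square)
  ultimately have "\<alpha> * (?m \<bullet> cond_omega k x + noise k x) - G2 / 2 * (\<alpha> * (\<alpha> * (norm (omega k x))\<^sup>2))
      \<le> KL_term P pistar (pol (theta k x)) - KL_term P pistar (pol (theta (Suc k) x))"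
    by (simp only:)
  then have "\<alpha> * (?m \<bullet> cond_omega k x + noise k x - \<alpha> * G2 / 2 * (norm (omega k x))\<^sup>2)
      \<le> KL_term P pistar (pol (theta k x)) - KL_term P pistar (pol (theta (Suc k) x))"
    by (simp add: algebra_simps)
  then have "?m \<bullet> cond_omega k x + noise k x - \<alpha> * G2 / 2 * (norm (omega k x))\<^sup>2
      \<le> (KL_term P pistar (pol (theta k x)) - KL_term P pistar (pol (theta (Suc k) x))) / \<alpha>"
    using alpha_pos by (simp add: pos_le_divide_eq mult.commute)
  moreover have "gap k x \<le> sqrt eps_bias + ?m \<bullet> cond_omega k x + excess k x"
    unfolding excess_def by linarith
  ultimately show ?thesis
    by linarith
qed

lemma pathwise_regret_bound:
  assumes x: "x \<in> space M"
  shows "(1 / real K) * (\<Sum>k<K. gap k x) + (1 / real K) * (\<Sum>k<K. noise k x) \<le> pathwise_bound x"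
proof -
  let ?KL = "\<lambda>k. KL_term P pistar (pol (theta k x))"
  have "(\<Sum>k<K. gap k x) + (\<Sum>k<K. noise k x) \<le> (\<Sum>k<K. sqrt eps_bias + excess k x
      + (?KL k - ?KL (Suc k)) / \<alpha> + \<alpha> * G2 / 2 * (norm (omega k x))\<^sup>2)"
    by (subst sum.distrib[symmetric]) (intro sum_mono step_bound[OF x], simp)
  also have "\<dots> = real K * sqrt eps_bias + (\<Sum>k<K. excess k x) + (?KL 0 - ?KL K) / \<alpha>
      + \<alpha> * G2 / 2 * (\<Sum>k<K. (norm (omega k x))\<^sup>2)"
    using sum_lessThan_telescope'[of ?KL K]
    by (simp add: sum.distrib sum_distrib_left flip: sum_divide_distrib)
  also have "\<dots> \<le> real K * sqrt eps_bias + (\<Sum>k<K. excess k x) + KL_term P pistar (pol th0) / \<alpha>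
      + \<alpha> * G2 / 2 * (\<Sum>k<K. (norm (omega k x))\<^sup>2)"
    using theta0 x alpha_pos pi_policy pi_pos
      KL_term_nonneg[OF kernel erg pistar_policy, of "pol (theta K x)"]
    by (simp add: divide_right_mono)
  finally have sum_le: "(\<Sum>k<K. gap k x) + (\<Sum>k<K. noise k x) \<le> real K * sqrt eps_bias
      + (\<Sum>k<K. excess k x) + KL_term P pistar (pol th0) / \<alpha> + \<alpha> * G2 / 2 * (\<Sum>k<K. (norm (omega k x))\<^sup>2)" .
  have "pathwise_bound x = (real K * sqrt eps_bias + (\<Sum>k<K. excess k x) + KL_term P pistar (pol th0) / \<alpha>
      + \<alpha> * G2 / 2 * (\<Sum>k<K. (norm (omega k x))\<^sup>2)) / real K"
    using K_pos alpha_pos by (simp add: pathwise_bound_def field_simps sum_divide_distrib[symmetric])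
  then show ?thesis
    using divide_right_mono[OF sum_le, of "real K"] by (simp add: add_divide_distrib)
qed

lemma noise_centred:
  assumes k: "k < K"
  shows "integrable M (noise k)" "(\<integral>x. noise k x \<partial>M) = 0"
proof -
  let ?m = "\<lambda>x. mean_score P pol pistar (theta k x)"
  have m_meas: "(\<lambda>x. ?m x $ i) \<in> borel_measurable (F k)" for i
    using adapted k by (intro measurable_mean_score_component[OF score_lip]) auto
  have m_bounded: "\<forall>x. \<bar>?m x $ i\<bar> \<le> G1" for i
    using norm_mean_score_le[OF kernel erg pistar_policy score_bound]
    by (meson component_le_norm_cart order_trans)
  note residual = integral_mult_cond_exp_residual[OF sigma_finite_F m_meas m_bounded]
  have noise: "noise k = (\<lambda>x. \<Sum>i\<in>UNIV. ?m x $ i *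
      (omega k x $ i - real_cond_exp M (F k) (\<lambda>y. omega k y $ i) x))"
    by (simp add: fun_eq_iff noise_def inner_vec_def cond_omega_def)
  show "integrable M (noise k)"
    unfolding noise using residual(1) omega_rv k by simp
  show "(\<integral>x. noise k x \<partial>M) = 0"
    unfolding noise using residual omega_rv k by (simp add: integral_sum)
qed

lemma nn_integral_pathwise_bound:
  "(\<integral>\<^sup>+x. ennreal (pathwise_bound x) \<partial>M)
    \<le> ennreal (sqrt eps_bias + KL_term P pistar (pol th0) / (\<alpha> * real K))
      + ennreal (G1 / real K) *
          (\<Sum>k<K. \<integral>\<^sup>+x. ennreal (norm (cond_omega k x - natgrad P r c pol (theta k x) (lam k x))) \<partial>M)
      + ennreal (\<alpha> * G2 / (2 * real K)) * (\<Sum>k<K. \<integral>\<^sup>+x. ennreal ((norm (omega k x))\<^sup>2) \<partial>M)"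
proof -
  have KL0: "0 \<le> KL_term P pistar (pol th0)"
    using KL_term_nonneg[OF kernel erg pistar_policy] pi_policy pi_pos by blast
  have excess_meas: "(\<lambda>x. excess k x / real K) \<in> borel_measurable M" if "k < K" for k
    using excess_measurable that by simp
  have omega_meas: "(\<lambda>x. (norm (omega k x))\<^sup>2) \<in> borel_measurable M" if "k < K" for k
  proof -
    have [measurable]: "omega k \<in> borel_measurable M"
      using omega_rv that by blast
    show ?thesis
      by measurable
  qed
  have excess_meas': "(\<lambda>x. ennreal (excess k x / real K)) \<in> borel_measurable M" if "k < K" for k
    using excess_meas[OF that] by simp
  have omega_meas': "(\<lambda>x. ennreal ((norm (omega k x))\<^sup>2)) \<in> borel_measurable M" if "k < K" for k
    using omega_meas[OF that] by simp
  define c0 where "c0 = sqrt eps_bias + KL_term P pistar (pol th0) / (\<alpha> * real K)"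
  define bW where "bW = \<alpha> * G2 / (2 * real K)"
  have c0: "0 \<le> c0" and bW: "0 \<le> bW"
    using eps_bias_nonneg KL0 alpha_pos G2_nonneg by (simp_all add: c0_def bW_def)
  have "pathwise_bound x = c0 + (\<Sum>k<K. excess k x / real K) + bW * (\<Sum>k<K. (norm (omega k x))\<^sup>2)" for x
    by (simp add: pathwise_bound_def c0_def bW_def)
  then have "ennreal (pathwise_bound x)
      = ennreal c0 + (\<Sum>k<K. ennreal (excess k x / real K)) + bW * (\<Sum>k<K. ennreal ((norm (omega k x))\<^sup>2))" for x
    using c0 bW excess_nonneg by (simp add: ennreal_mult sum_nonneg)
  then have "(\<integral>\<^sup>+x. ennreal (pathwise_bound x) \<partial>M)
      = (\<integral>\<^sup>+x. ennreal c0 \<partial>M) + (\<integral>\<^sup>+x. (\<Sum>k<K. ennreal (excess k x / real K)) \<partial>M)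
        + (\<integral>\<^sup>+x. ennreal bW * (\<Sum>k<K. ennreal ((norm (omega k x))\<^sup>2)) \<partial>M)"
    using excess_meas omega_meas by (simp add: nn_integral_add borel_measurable_sum)
  also have "\<dots> = ennreal c0 + (\<Sum>k<K. \<integral>\<^sup>+x. ennreal (excess k x / real K) \<partial>M)
        + ennreal bW * (\<Sum>k<K. \<integral>\<^sup>+x. ennreal ((norm (omega k x))\<^sup>2) \<partial>M)"
  proof -
    have "(\<integral>\<^sup>+x. ennreal bW * (\<Sum>k<K. ennreal ((norm (omega k x))\<^sup>2)) \<partial>M)
        = ennreal bW * (\<integral>\<^sup>+x. (\<Sum>k<K. ennreal ((norm (omega k x))\<^sup>2)) \<partial>M)"
      by (rule nn_integral_cmult) (use omega_meas' in auto)
    moreover have "(\<integral>\<^sup>+x. (\<Sum>k<K. ennreal ((norm (omega k x))\<^sup>2)) \<partial>M)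
        = (\<Sum>k<K. \<integral>\<^sup>+x. ennreal ((norm (omega k x))\<^sup>2) \<partial>M)"
      by (rule nn_integral_sum) (use omega_meas' in auto)
    moreover have "(\<integral>\<^sup>+x. (\<Sum>k<K. ennreal (excess k x / real K)) \<partial>M)
        = (\<Sum>k<K. \<integral>\<^sup>+x. ennreal (excess k x / real K) \<partial>M)"
      by (rule nn_integral_sum) (use excess_meas' in auto)
    moreover have "(\<integral>\<^sup>+x. ennreal c0 \<partial>M) = ennreal c0"
      using prob by (simp add: prob_space.emeasure_space_1)
    ultimately show ?thesis
      by (simp only:)
  qed
  also have "\<dots> \<le> ennreal c0 + ennreal (G1 / real K) *
          (\<Sum>k<K. \<integral>\<^sup>+x. ennreal (norm (cond_omega k x - natgrad P r c pol (theta k x) (lam k x))) \<partial>M)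
      + ennreal bW * (\<Sum>k<K. \<integral>\<^sup>+x. ennreal ((norm (omega k x))\<^sup>2) \<partial>M)"
    unfolding sum_distrib_left using excess_meas excess_le G1_nonneg
    by (intro add_mono order_refl sum_mono nn_integral_le_cmult_dominated) (auto simp: divide_right_mono)
  finally show ?thesis
    unfolding c0_def bW_def .
qed

theorem expected_regret_bound:
  "ereal ((1 / real K) *
      (\<integral>x. (\<Sum>k<K. Lagr P r c pistar (lam k x) - Lagr P r c (pol (theta k x)) (lam k x)) \<partial>M))
    \<le> ereal (sqrt eps_bias)
      + ereal (G1 / real K) *
          (\<Sum>k<K. enn2ereal (\<integral>\<^sup>+x. ennreal (norm (cond_omega k x
             - natgrad P r c pol (theta k x) (lam k x))) \<partial>M))
      + ereal (\<alpha> * G2 / (2 * real K)) *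
          (\<Sum>k<K. enn2ereal (\<integral>\<^sup>+x. ennreal ((norm (omega k x))\<^sup>2) \<partial>M))
      + ereal (1 / (\<alpha> * real K)) * ereal (KL_term P pistar (pol th0))"
proof -
  have "integrable M (\<lambda>x. \<Sum>k<K. noise k x)"
    using noise_centred(1) by (intro Bochner_Integration.integrable_sum) simp
  then have noise_sum: "integrable M (\<lambda>x. (1 / real K) * (\<Sum>k<K. noise k x))"
    "(\<integral>x. (1 / real K) * (\<Sum>k<K. noise k x) \<partial>M) = 0"
    using noise_centred by (simp_all add: integral_sum del: times_divide_eq_left)
  have "ereal (\<integral>x. (1 / real K) * (\<Sum>k<K. gap k x) \<partial>M)
      \<le> enn2ereal (\<integral>\<^sup>+x. ennreal (pathwise_bound x) \<partial>M)"
    using pathwise_regret_bound by (intro integral_le_nn_integral_centred[OF noise_sum]) blast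
  also have "\<dots> \<le> enn2ereal (ennreal (sqrt eps_bias + KL_term P pistar (pol th0) / (\<alpha> * real K))
      + ennreal (G1 / real K) *
          (\<Sum>k<K. \<integral>\<^sup>+x. ennreal (norm (cond_omega k x - natgrad P r c pol (theta k x) (lam k x))) \<partial>M)
      + ennreal (\<alpha> * G2 / (2 * real K)) * (\<Sum>k<K. \<integral>\<^sup>+x. ennreal ((norm (omega k x))\<^sup>2) \<partial>M))"
    using nn_integral_pathwise_bound by (simp add: less_eq_ennreal.rep_eq)
  finally show ?thesis
    using eps_bias_nonneg G1_nonneg G2_nonneg alpha_pos K_pos
      KL_term_nonneg[OF kernel erg pistar_policy, of "pol th0"] pi_policy pi_pos
    by (simp add: gap_def plus_ennreal.rep_eq times_ennreal.rep_eq ac_simps)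
qed

end

theorem lemma1:
  fixes P :: "'s::finite \<Rightarrow> 'a::finite \<Rightarrow> 's \<Rightarrow> real"
    and r c :: "'s \<Rightarrow> 'a \<Rightarrow> real"
    and pol :: "real^'d \<Rightarrow> 's \<Rightarrow> 'a \<Rightarrow> real"
    and pistar :: "'s \<Rightarrow> 'a \<Rightarrow> real"
    and \<delta> \<mu> G1 G2 eps_bias \<alpha> :: real
    and K :: nat
    and M :: "'w measure" and F :: "nat \<Rightarrow> 'w measure"
    and theta omega :: "nat \<Rightarrow> 'w \<Rightarrow> real^'d"
    and lam :: "nat \<Rightarrow> 'w \<Rightarrow> real"
    and th0 :: "real^'d"
  assumes kernel: "is_kernel P"
    and erg: "ergodic P"
    and r_range: "\<forall>s a. 0 \<le> r s a \<and> r s a \<le> 1"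
    and c_range: "\<forall>s a. -1 \<le> c s a \<and> c s a \<le> 1"
    and pi_policy: "\<forall>\<theta>. is_policy (pol \<theta>)"
    and pi_pos: "\<forall>\<theta> s a. 0 < pol \<theta> s a"
    and pi_diff: "\<forall>\<theta> s a. (\<lambda>t. pol t s a) differentiable (at \<theta>)"
    and slater: "0 < \<delta>" "\<delta> < 1" "\<exists>\<theta>b. \<delta> \<le> Jv P (pol \<theta>b) c"
    and pistar_opt: "is_policy pistar" "0 \<le> Jv P pistar c"
      "\<forall>q. is_policy q \<and> 0 \<le> Jv P q c \<longrightarrow> Jv P q r \<le> Jv P pistar r"
    and score_bound: "\<forall>\<theta> s a. norm (score pol \<theta> s a) \<le> G1"
    and score_lip: "\<forall>\<theta>1 \<theta>2 s a. norm (score pol \<theta>1 s a - score pol \<theta>2 s a) \<le> G2 * norm (\<theta>1 - \<theta>2)"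
    and fisher_nondeg: "0 < \<mu>" "\<forall>\<theta> x. \<mu> * (x \<bullet> x) \<le> x \<bullet> (fisher P pol \<theta> *v x)"
    and compat: "\<forall>\<theta> l. 0 \<le> l \<and> l \<le> 2 / \<delta> \<longrightarrow>
       (\<Sum>s\<in>UNIV. \<Sum>a\<in>UNIV. occ P pistar s a *
          (score pol \<theta> s a \<bullet> natgrad P r c pol \<theta> l
             - Adv P (pol \<theta>) r s a - l * Adv P (pol \<theta>) c s a)\<^sup>2) \<le> eps_bias"
    and prob: "prob_space M"
    and filt: "\<forall>k. subalgebra M (F k)" "\<forall>k. sets (F k) \<subseteq> sets (F (Suc k))"
    and adapted: "\<forall>k\<le>K. theta k \<in> borel_measurable (F k) \<and> lam k \<in> borel_measurable (F k)"
    and lam_range: "\<forall>k\<le>K. \<forall>x\<in>space M. 0 \<le> lam k x \<and> lam k x \<le> 2 / \<delta>"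
    and theta0: "\<forall>x\<in>space M. theta 0 x = th0"
    and alpha_pos: "0 < \<alpha>"
    and update: "\<forall>k<K. \<forall>x\<in>space M. theta (Suc k) x = theta k x + \<alpha> *\<^sub>R omega k x"
    and omega_rv: "\<forall>k<K. omega k \<in> borel_measurable M \<and> (\<forall>i. integrable M (\<lambda>x. omega k x $ i))"
    and K_pos: "0 < K"
  shows "ereal ((1 / real K) *
            (\<integral>x. (\<Sum>k<K. Lagr P r c pistar (lam k x) - Lagr P r c (pol (theta k x)) (lam k x)) \<partial>M))
    \<le> ereal (sqrt eps_bias)
      + ereal (G1 / real K) *
          (\<Sum>k<K. enn2ereal (\<integral>\<^sup>+x. ennreal (norm
              ((\<chi> i. real_cond_exp M (F k) (\<lambda>y. omega k y $ i) x)
                 - natgrad P r c pol (theta k x) (lam k x))) \<partial>M))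
      + ereal (\<alpha> * G2 / (2 * real K)) *
          (\<Sum>k<K. enn2ereal (\<integral>\<^sup>+x. ennreal ((norm (omega k x))\<^sup>2) \<partial>M))
      + ereal (1 / (\<alpha> * real K)) * ereal (KL_term P pistar (pol th0))"
proof -
  interpret npg_iterates P r c pol pistar \<delta> G1 G2 eps_bias \<alpha> K M F theta omega lam th0
    unfolding npg_iterates_def by (intro conjI; fact)
  show ?thesis
    using expected_regret_bound unfolding cond_omega_def .
qed

end
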